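(* (a) Let $H$ be a connected, $\Delta$-regular digraph and $\delta>0$. If $n^{-2/\Delta}\ll p\ll1$, then \[ \frac{\Phi_{n,p}(H,\delta)}{n^2p^\Delta\log(1/p)}\le\delta^{2/\mathsf v(H)}+o(1). \] (b) Let $H$ be a digraph with maximum degree $\Delta$ and $\delta>0$. If $n^{-1/\Delta}\ll p\ll1$, then \[ \frac{\Phi_{n,p}(H,\delta)}{n^2p^\Delta\log(1/p)}\le\inf_{x_1,x_2\ge0,\ 0\le y_1,y_2\le1}\{x_1y_1+x_2y_2:\bar f_H(x_1,x_2,y_1,y_2)=1+\delta\}+o(1). \] Further, the infimum on the right-hand side is obtained when $y_1\vee y_2=1$ (restricting to $\max(y_1,y_2)=1$ does not change its value).
   Context: A digraph has no self-loops and at most one directed edge per ordered pair of vertices; $\mathsf v(H),\mathsf e(H)$ are the numbers of vertices and edges; degree = in-degree + out-degree; $\Delta$ is the maximum degree; $\Delta$-regular means all degrees equal $\Delta$; $p=p(n)$ and asymptotics are as $n\to\infty$. $\mathcal Q_n$ is the set of $n\times n$ matrices with zero diagonal and entries in $[0,1]$; $t(H,Q)=n^{-\mathsf v(H)}\sum_{\phi:\mathsf V(H)\to[n]}\prod_{(i,j)\in\mathsf E(H)}Q(\phi(i),\phi(j))$; $I_p(x)=x\log\frac xp+(1-x)\log\frac{1-x}{1-p}$, $I_p(Q)=\sum_{i\neq j}I_p(Q(i,j))$; $\Phi_{n,p}(H,\delta)=\inf_{Q\in\mathcal Q_n}\{I_p(Q):t(H,Q)\ge(1+\delta)p^{\mathsf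 e(H)}\}$. $H^*$ is the induced subgraph on vertices of degree $\Delta$, $\mathcal S_H$ the set of independent sets of $H^*$ (including $\emptyset$). For $S$: $\mathsf N^+(S)$ = vertices $v\notin S$ with an edge $(u,v)$, $u\in S$; $\mathsf N^-(S)$ = vertices $v\notin S$ with an edge $(v,u)$, $u\in S$; $\mathsf N^{\pm}(S)=\mathsf N^+(S)\cap\mathsf N^-(S)$, $\mathsf N^{+,0}(S)=\mathsf N^+(S)\setminus\mathsf N^-(S)$, $\mathsf N^{-,0}(S)=\mathsf N^-(S)\setminus\mathsf N^+(S)$, with $\mathsf n^{\pm}(S),\mathsf n^{+,0}(S),\mathsf n^{-,0}(S)$ their cardinalities. $\mathsf v^+(S)$, $\mathsf v^-(S)$, $\mathsf v^{\pm}(S)$ are the numbers of vertices of $S$ with no in-neighbours, no out-neighbours, and both in- and out-neighbours in $H$, respectively. Define \[ \bar f_H(x_1,x_2,y_1,y_2)=\sum_{S\in\mathcal S_H}x_1^{\mathsf v^+(S)}x_2^{\mathsf v^-(S)}(x_1\wedge x_2)^{\mathsf v^{\pm}(S)}y_1^{\mathsf n^{+,0}(S)}y_2^{\mathsf n^{-,0}(S)}(y_1\wedge y_2)^{\mathsf n^{\pm}(S)}. \] *)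

theory Defs
  imports Complex_Main "HOL-Library.FuncSet" "HOL-Library.Landau_Symbols"
begin

definition digraph :: "('v \<times> 'v) set \<Rightarrow> bool" where
  "digraph E \<longleftrightarrow> (\<forall>v. (v, v) \<notin> E)"

definition outdeg :: "('v \<times> 'v) set \<Rightarrow> 'v \<Rightarrow> nat" where
  "outdeg E v = card {u. (v, u) \<in> E}"

definition indeg :: "('v \<times> 'v) set \<Rightarrow> 'v \<Rightarrow> nat" where
  "indeg E v = card {u. (u, v) \<in> E}"

definition deg :: "('v \<times> 'v) set \<Rightarrow> 'v \<Rightarrow> nat" where
  "deg E v = indeg E v + outdeg E v"

definition maxdeg :: "('v \<times> 'v) set \<Rightarrow> nat" where
  "maxdeg E = Max (range (deg E))"

definition regular :: "('v \<times> 'v) set \<Rightarrow> nat \<Rightarrow> bool" where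
  "regular E d \<longleftrightarrow> (\<forall>v. deg E v = d)"

text \<open>Connected = weakly connected (underlying undirected graph connected).\<close>
definition weakly_connected :: "('v \<times> 'v) set \<Rightarrow> bool" where
  "weakly_connected E \<longleftrightarrow> (\<forall>u v. (u, v) \<in> (E \<union> E\<inverse>)\<^sup>*)"

definition Qset :: "nat \<Rightarrow> (nat \<Rightarrow> nat \<Rightarrow> real) set" where
  "Qset n = {Q. (\<forall>i<n. Q i i = 0) \<and> (\<forall>i<n. \<forall>j<n. 0 \<le> Q i j \<and> Q i j \<le> 1)}"

definition hom_density :: "('v::finite \<times> 'v) set \<Rightarrow> nat \<Rightarrow> (nat \<Rightarrow> nat \<Rightarrow> real) \<Rightarrow> real" where
  "hom_density E n Q =
     (\<Sum>\<phi>\<in>(UNIV::'v set) \<rightarrow>\<^sub>E {..<n}. \<Prod>e\<in>E. Q (\<phi> (fst e)) (\<phi> (snd e))) / real n ^ card (UNIV::'v set)"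

text \<open>Relative entropy I_p(x); at x = 0 or x = 1 the vanishing factor makes the term 0
  (convention 0 log 0 = 0).\<close>
definition Ient :: "real \<Rightarrow> real \<Rightarrow> real" where
  "Ient p x = x * ln (x / p) + (1 - x) * ln ((1 - x) / (1 - p))"

definition Ient_mat :: "real \<Rightarrow> nat \<Rightarrow> (nat \<Rightarrow> nat \<Rightarrow> real) \<Rightarrow> real" where
  "Ient_mat p n Q = (\<Sum>i<n. \<Sum>j<n. if i \<noteq> j then Ient p (Q i j) else 0)"

definition Phi :: "('v::finite \<times> 'v) set \<Rightarrow> nat \<Rightarrow> real \<Rightarrow> real \<Rightarrow> real" where
  "Phi E n p \<delta> = Inf {Ient_mat p n Q | Q. Q \<in> Qset n \<and> hom_density E n Q \<ge> (1 + \<delta>) * p ^ card E}"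

definition indep_sets :: "('v \<times> 'v) set \<Rightarrow> 'v set set" where
  "indep_sets E = {S. S \<subseteq> {v. deg E v = maxdeg E} \<and> (\<forall>u\<in>S. \<forall>v\<in>S. (u, v) \<notin> E)}"

definition Nplus :: "('v \<times> 'v) set \<Rightarrow> 'v set \<Rightarrow> 'v set" where
  "Nplus E S = {v. v \<notin> S \<and> (\<exists>u\<in>S. (u, v) \<in> E)}"

definition Nminus :: "('v \<times> 'v) set \<Rightarrow> 'v set \<Rightarrow> 'v set" where
  "Nminus E S = {v. v \<notin> S \<and> (\<exists>u\<in>S. (v, u) \<in> E)}"

definition vplus :: "('v \<times> 'v) set \<Rightarrow> 'v set \<Rightarrow> nat" where
  "vplus E S = card {v\<in>S. \<not> (\<exists>u. (u, v) \<in> E)}"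

definition vminus :: "('v \<times> 'v) set \<Rightarrow> 'v set \<Rightarrow> nat" where
  "vminus E S = card {v\<in>S. \<not> (\<exists>u. (v, u) \<in> E)}"

definition vpm :: "('v \<times> 'v) set \<Rightarrow> 'v set \<Rightarrow> nat" where
  "vpm E S = card {v\<in>S. (\<exists>u. (u, v) \<in> E) \<and> (\<exists>u. (v, u) \<in> E)}"

definition fbar :: "('v \<times> 'v) set \<Rightarrow> real \<Rightarrow> real \<Rightarrow> real \<Rightarrow> real \<Rightarrow> real" where
  "fbar E x1 x2 y1 y2 =
     (\<Sum>S\<in>indep_sets E.
        x1 ^ vplus E S * x2 ^ vminus E S * (min x1 x2) ^ vpm E S
        * y1 ^ card (Nplus E S - Nminus E S) * y2 ^ card (Nminus E S - Nplus E S)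
        * (min y1 y2) ^ card (Nplus E S \<inter> Nminus E S))"

end

(*
  Every bound on Phi comes from a planted matrix: Q equals 1 on a set B of pairs and p elsewhere
  off the diagonal, so its entropy cost is at most |B| log(1/p), and its homomorphism density is
  at least the contribution of the injective maps of H that send prescribed edges into B.

  (a) For Delta-regular H plant a clique on s ~ c n p^(Delta/2) vertices.  Maps into the clique
  contribute (s/n)^v = c^v p^e (as 2e = v Delta), maps avoiding it about p^e, so c^v > delta
  suffices, at cost s^2 log(1/p) = c^2 n^2 p^Delta log(1/p).

  (b) Plant all pairs from a1 ~ x1 n p^Delta hubs to a block of b1 ~ y1 n vertices, and from a
  block of b2 ~ y2 n vertices to a2 ~ x2 n p^Delta hubs.  For an independent set S of H^*, mapping
  S into the hubs and its neighbourhood into the blocks makes all Delta |S| edges at S present;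
  summing over S gives density about p^e fbar(x, y), at cost (x1 y1 + x2 y2) n^2 p^Delta log(1/p).

  For the normalization max(y1, y2) = 1, put m = max(y1, y2): replacing (x, y) by (m x, y / m)
  keeps the cost and does not decrease fbar, since |S| <= |N(S)| for independent sets of
  maximum-degree vertices; shrinking x back to the level set by continuity only lowers the cost.
*)

theory Submission
  imports Defs
begin

section \<open>Planted matrices\<close>

lemma Ient_nonneg:
  assumes "0 < p" "p < 1" "0 \<le> x" "x \<le> 1"
  shows "0 \<le> Ient p x"
proof -
  have gibbs: "a - b \<le> a * ln (a / b)" if "0 \<le> a" "0 < b" for a b :: real
  proof (cases "a = 0")
    case False
    then have "ln (b / a) \<le> b / a - 1" using that by (intro ln_le_minus_one) simp
    then have "a * (1 - b / a) \<le> a * ln (a / b)"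
      using that False by (intro mult_left_mono) (simp_all add: ln_div)
    moreover have "a * (1 - b / a) = a - b" using False by (simp add: field_simps)
    ultimately show ?thesis by simp
  qed (use that in simp)
  show ?thesis
    using gibbs[of x p] gibbs[of "1 - x" "1 - p"] assms unfolding Ient_def by simp
qed

lemma Ient_mat_nonneg: "0 < p \<Longrightarrow> p < 1 \<Longrightarrow> Q \<in> Qset n \<Longrightarrow> 0 \<le> Ient_mat p n Q"
  unfolding Ient_mat_def Qset_def by (auto intro!: sum_nonneg Ient_nonneg)

lemma Phi_le_Ient_mat:
  assumes "0 < p" "p < 1" "Q \<in> Qset n" "(1 + \<delta>) * p ^ card E \<le> hom_density E n Q"
  shows "Phi E n p \<delta> \<le> Ient_mat p n Q"
  unfolding Phi_def
proof (rule cInf_lower)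
  show "bdd_below {Ient_mat p n Q | Q. Q \<in> Qset n \<and> (1 + \<delta>) * p ^ card E \<le> hom_density E n Q}"
    using Ient_mat_nonneg[OF assms(1,2)] by (intro bdd_belowI[of _ 0]) blast
qed (use assms in blast)

lemma Phi_ratio_le:
  assumes "0 < p" "p < 1" "0 < n" "Q \<in> Qset n" "(1 + \<delta>) * p ^ card E \<le> hom_density E n Q"
    and "Ient_mat p n Q \<le> C * (real n ^ 2 * p ^ D * ln (1 / p))"
  shows "Phi E n p \<delta> / (real n ^ 2 * p ^ D * ln (1 / p)) \<le> C"
proof -
  have "0 < real n ^ 2 * p ^ D * ln (1 / p)" using assms(1-3) by simp
  moreover have "Phi E n p \<delta> \<le> C * (real n ^ 2 * p ^ D * ln (1 / p))"
    using Phi_le_Ient_mat[OF assms(1,2,4,5)] assms(6) by linarith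
  ultimately show ?thesis by (simp add: pos_divide_le_eq)
qed

definition planted :: "real \<Rightarrow> (nat \<times> nat) set \<Rightarrow> nat \<Rightarrow> nat \<Rightarrow> real" where
  "planted p B i j = (if i = j then 0 else if (i, j) \<in> B then 1 else p)"

lemma planted_in_Qset: "0 \<le> p \<Longrightarrow> p \<le> 1 \<Longrightarrow> planted p B \<in> Qset n"
  unfolding Qset_def planted_def by auto

lemma Ient_mat_planted_le:
  assumes "0 < p" "p < 1" "finite B"
  shows "Ient_mat p n (planted p B) \<le> real (card B) * ln (1 / p)"
proof -
  let ?L = "ln (1 / p)"
  let ?N = "{..<n} \<times> {..<n}"
  have "Ient_mat p n (planted p B) \<le> (\<Sum>i<n. \<Sum>j<n. if (i, j) \<in> B then ?L else 0)"
    unfolding Ient_mat_def using assms by (intro sum_mono) (simp add: planted_def Ient_def)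
  also have "\<dots> = (\<Sum>ij\<in>?N. if ij \<in> B then ?L else 0)"
    by (simp add: sum.cartesian_product)
  also have "\<dots> = real (card (?N \<inter> B)) * ?L"
    by (simp add: sum.If_cases Int_def)
  also have "\<dots> \<le> real (card B) * ?L"
    using assms by (intro mult_right_mono) (simp_all add: card_mono)
  finally show ?thesis .
qed

lemma prod_planted_inj:
  fixes E :: "('v \<times> 'v) set"
  assumes "digraph E" "finite E" "inj \<phi>"
  shows "(\<Prod>e\<in>E. planted p B (\<phi> (fst e)) (\<phi> (snd e)))
           = p ^ card {e\<in>E. (\<phi> (fst e), \<phi> (snd e)) \<notin> B}"
proof -
  have "(\<Prod>e\<in>E. planted p B (\<phi> (fst e)) (\<phi> (snd e)))
      = (\<Prod>e\<in>E. if (\<phi> (fst e), \<phi> (snd e)) \<notin> B then p else 1)"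
    using assms(1,3) by (intro prod.cong) (auto simp: planted_def digraph_def inj_eq)
  also have "\<dots> = (\<Prod>e\<in>{e\<in>E. (\<phi> (fst e), \<phi> (snd e)) \<notin> B}. p)"
    using assms(2) by (rule prod.inter_filter[symmetric])
  finally show ?thesis by simp
qed

lemma card_inj_PiE_ge:
  assumes "finite F" "\<And>v. v \<in> F \<Longrightarrow> finite (T v)"
  shows "(\<Prod>v\<in>F. card (T v) - card F) \<le> card {\<phi> \<in> Pi\<^sub>E F T. inj_on \<phi> F}"
  using assms
proof (induction F rule: finite_induct)
  case (insert a F)
  define G where "G = {\<phi> \<in> Pi\<^sub>E F T. inj_on \<phi> F}"
  define G' where "G' = {\<phi> \<in> Pi\<^sub>E (insert a F) T. inj_on \<phi> (insert a F)}"
  define extensions where "extensions = (SIGMA \<phi>:G. T a - \<phi> ` F)"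
  have "inj_on (\<lambda>(\<phi>, x). \<phi>(a := x)) extensions"
    using inj_combinator[OF insert(2), of T] unfolding extensions_def G_def inj_on_def by auto
  moreover have "(\<lambda>(\<phi>, x). \<phi>(a := x)) ` extensions \<subseteq> G'"
    using insert(2) unfolding extensions_def G_def G'_def
    by (force intro!: PiE_fun_upd inj_on_fun_updI)
  moreover have "finite G'"
    unfolding G'_def using insert by (intro finite_subset[OF _ finite_PiE[of "insert a F" T]]) auto
  ultimately have "card extensions \<le> card G'"
    by (rule card_inj_on_le)
  have "card G * (card (T a) - card F) \<le> (\<Sum>\<phi>\<in>G. card (T a - \<phi> ` F))"
  proof -
    have "card (T a) - card F \<le> card (T a - \<phi> ` F)" for \<phi>
      using card_image_le[OF insert(1), of \<phi>] diff_card_le_card_Diff[of "\<phi> ` F" "T a"] insert(1)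
      by simp
    then show ?thesis using sum_mono[of G "\<lambda>_. card (T a) - card F"] by simp
  qed
  also have "\<dots> = card extensions"
    unfolding extensions_def using insert by (simp add: G_def finite_PiE)
  finally have step: "card G * (card (T a) - card F) \<le> card G'"
    using \<open>card extensions \<le> card G'\<close> by linarith
  have "(\<Prod>v\<in>insert a F. card (T v) - card (insert a F))
      \<le> (card (T a) - card F) * (\<Prod>v\<in>F. card (T v) - card F)"
    using insert by (auto intro!: mult_mono prod_mono)
  also have "\<dots> \<le> (card (T a) - card F) * card G"
    using insert unfolding G_def by simp
  finally show ?case using step unfolding G'_def by (simp add: mult.commute)
qed simp

lemma sum_planted_inj_ge:
  fixes E :: "('v::finite \<times> 'v) set" and T :: "'v \<Rightarrow> nat set"
  assumes E: "digraph E" and p: "0 \<le> p" "p \<le> 1" and T: "\<And>v. finite (T v)"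
    and missed: "\<And>\<phi>. \<phi> \<in> Pi\<^sub>E UNIV T \<Longrightarrow> inj \<phi> \<Longrightarrow> card {e\<in>E. (\<phi> (fst e), \<phi> (snd e)) \<notin> B} \<le> m"
  shows "real (\<Prod>v\<in>UNIV. card (T v) - card (UNIV::'v set)) * p ^ m
           \<le> (\<Sum>\<phi>\<in>{\<phi> \<in> Pi\<^sub>E UNIV T. inj \<phi>}. \<Prod>e\<in>E. planted p B (\<phi> (fst e)) (\<phi> (snd e)))"
proof -
  let ?M = "{\<phi> \<in> Pi\<^sub>E UNIV T. inj \<phi>}"
  have "(\<Prod>v\<in>UNIV. card (T v) - card (UNIV::'v set)) \<le> card ?M"
    using card_inj_PiE_ge[of UNIV T] T by simp
  then have "real (\<Prod>v\<in>UNIV. card (T v) - card (UNIV::'v set)) * p ^ m \<le> real (card ?M) * p ^ m"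
    using p by (intro mult_right_mono) (simp_all only: of_nat_le_iff zero_le_power)
  also have "\<dots> = (\<Sum>\<phi>\<in>?M. p ^ m)"
    by simp
  also have "\<dots> \<le> (\<Sum>\<phi>\<in>?M. \<Prod>e\<in>E. planted p B (\<phi> (fst e)) (\<phi> (snd e)))"
  proof (rule sum_mono)
    fix \<phi> assume "\<phi> \<in> ?M"
    then show "p ^ m \<le> (\<Prod>e\<in>E. planted p B (\<phi> (fst e)) (\<phi> (snd e)))"
      using prod_planted_inj[OF E] missed p by (simp add: power_decreasing)
  qed
  finally show ?thesis .
qed

lemma hom_density_planted_ge:
  fixes E :: "('v::finite \<times> 'v) set" and T :: "'i \<Rightarrow> 'v \<Rightarrow> nat set"
  assumes E: "digraph E" and p: "0 \<le> p" "p \<le> 1" and I: "finite I"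
    and T_range: "\<And>i v. i \<in> I \<Longrightarrow> T i v \<subseteq> {..<n}"
    and T_apart: "\<And>i j. i \<in> I \<Longrightarrow> j \<in> I \<Longrightarrow> i \<noteq> j \<Longrightarrow> \<exists>v. T i v \<inter> T j v = {}"
    and missed: "\<And>i \<phi>. i \<in> I \<Longrightarrow> \<phi> \<in> Pi\<^sub>E UNIV (T i) \<Longrightarrow> inj \<phi> \<Longrightarrow>
                      card {e\<in>E. (\<phi> (fst e), \<phi> (snd e)) \<notin> B} \<le> m i"
  shows "(\<Sum>i\<in>I. real (\<Prod>v\<in>UNIV. card (T i v) - card (UNIV::'v set)) * p ^ m i) / real n ^ card (UNIV::'v set)
           \<le> hom_density E n (planted p B)"
proof -
  define M where "M i = {\<phi> \<in> Pi\<^sub>E UNIV (T i). inj \<phi>}" for i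
  let ?w = "\<lambda>\<phi>. \<Prod>e\<in>E. planted p B (\<phi> (fst e)) (\<phi> (snd e))"
  have M_range: "M i \<subseteq> UNIV \<rightarrow>\<^sub>E {..<n}" if "i \<in> I" for i
    using T_range[OF that] unfolding M_def by (auto simp: PiE_iff)
  have M_finite: "finite (M i)" if "i \<in> I" for i
    by (rule finite_subset[OF M_range[OF that]]) (simp add: finite_PiE)
  have M_disjoint: "M i \<inter> M j = {}" if ij: "i \<in> I" "j \<in> I" "i \<noteq> j" for i j
  proof -
    obtain v where "T i v \<inter> T j v = {}" using T_apart[OF ij] by blast
    then show ?thesis unfolding M_def by (auto simp: PiE_iff)
  qed
  have "(\<Sum>i\<in>I. real (\<Prod>v\<in>UNIV. card (T i v) - card (UNIV::'v set)) * p ^ m i)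
      \<le> (\<Sum>i\<in>I. \<Sum>\<phi>\<in>M i. ?w \<phi>)"
    unfolding M_def using T_range missed finite_subset[OF T_range]
    by (intro sum_mono sum_planted_inj_ge[OF E p]) auto
  also have "\<dots> = (\<Sum>\<phi>\<in>(\<Union>i\<in>I. M i). ?w \<phi>)"
    using M_finite M_disjoint I by (simp add: sum.UNION_disjoint)
  also have "\<dots> \<le> (\<Sum>\<phi>\<in>UNIV \<rightarrow>\<^sub>E {..<n}. ?w \<phi>)"
    using M_range p by (intro sum_mono2 prod_nonneg) (auto simp: finite_PiE planted_def)
  finally show ?thesis
    unfolding hom_density_def by (simp add: divide_right_mono)
qed

section \<open>Degrees and independent sets of maximum-degree vertices\<close>

lemma deg_le_maxdeg: "deg E v \<le> maxdeg (E :: ('v::finite \<times> 'v) set)"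
  unfolding maxdeg_def by (rule Max_ge) auto

lemma maxdeg_attained: "\<exists>v. deg E v = maxdeg (E :: ('v::finite \<times> 'v) set)"
proof -
  have "maxdeg E \<in> range (deg E)" unfolding maxdeg_def by (rule Max_in) auto
  then show ?thesis by auto
qed

lemma maxdeg_pos:
  assumes "E \<noteq> {}"
  shows "0 < maxdeg (E :: ('v::finite \<times> 'v) set)"
proof -
  obtain u v where "(u, v) \<in> E" using assms by auto
  then have "0 < outdeg E u" unfolding outdeg_def by (auto simp: card_gt_0_iff)
  then show ?thesis using deg_le_maxdeg[of E u] by (simp add: deg_def)
qed

lemma card_out_edges: "card {e\<in>E. fst e \<in> S} = (\<Sum>v\<in>S. outdeg E v)"
  for E :: "('v::finite \<times> 'v) set"
proof -
  have "{e\<in>E. fst e \<in> S} = (SIGMA v:S. {u. (v, u) \<in> E})" by auto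
  then show ?thesis unfolding outdeg_def by (simp add: card_SigmaI)
qed

lemma card_in_edges: "card {e\<in>E. snd e \<in> S} = (\<Sum>v\<in>S. indeg E v)"
  for E :: "('v::finite \<times> 'v) set"
proof -
  have "{e\<in>E. snd e \<in> S} = prod.swap ` (SIGMA v:S. {u. (u, v) \<in> E})" by force
  then show ?thesis unfolding indeg_def by (simp add: card_image card_SigmaI)
qed

lemma regular_handshake:
  fixes E :: "('v::finite \<times> 'v) set"
  assumes "regular E d"
  shows "2 * card E = card (UNIV :: 'v set) * d"
proof -
  have "card E = (\<Sum>v\<in>UNIV. outdeg E v)" "card E = (\<Sum>v\<in>UNIV. indeg E v)"
    using card_out_edges[of E UNIV] card_in_edges[of E UNIV] by simp_all
  then have "2 * card E = (\<Sum>v\<in>UNIV. deg E v)"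
    by (simp add: deg_def sum.distrib)
  then show ?thesis using assms by (simp add: regular_def)
qed

lemma card_incident_edges_le:
  "card {e\<in>E. fst e \<in> S \<or> snd e \<in> S} \<le> (\<Sum>v\<in>S. deg E v)"
  for E :: "('v::finite \<times> 'v) set"
proof -
  have "{e\<in>E. fst e \<in> S \<or> snd e \<in> S} = {e\<in>E. fst e \<in> S} \<union> {e\<in>E. snd e \<in> S}" by auto
  then show ?thesis
    using card_Un_le[of "{e\<in>E. fst e \<in> S}" "{e\<in>E. snd e \<in> S}"]
    by (simp add: card_out_edges card_in_edges deg_def sum.distrib)
qed

lemma card_incident_edges_indep:
  fixes E :: "('v::finite \<times> 'v) set"
  assumes "S \<in> indep_sets E"
  shows "card {e\<in>E. fst e \<in> S \<or> snd e \<in> S} = maxdeg E * card S"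
proof -
  have "{e\<in>E. fst e \<in> S \<or> snd e \<in> S} = {e\<in>E. fst e \<in> S} \<union> {e\<in>E. snd e \<in> S}"
    and "{e\<in>E. fst e \<in> S} \<inter> {e\<in>E. snd e \<in> S} = {}"
    using assms by (auto simp: indep_sets_def)
  then have "card {e\<in>E. fst e \<in> S \<or> snd e \<in> S} = (\<Sum>v\<in>S. deg E v)"
    by (simp add: card_Un_disjoint card_out_edges card_in_edges deg_def sum.distrib)
  also have "\<dots> = (\<Sum>v\<in>S. maxdeg E)"
    using assms by (intro sum.cong) (auto simp: indep_sets_def)
  finally show ?thesis by simp
qed

lemma indep_sets_has_neighbour:
  assumes "S \<in> indep_sets E" "v \<in> S" "0 < maxdeg E"
  shows "(\<exists>u. (u, v) \<in> E) \<or> (\<exists>u. (v, u) \<in> E)"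
proof (rule ccontr)
  assume "\<not> ?thesis"
  then have "deg E v = 0" by (simp add: deg_def indeg_def outdeg_def)
  moreover have "deg E v = maxdeg E" using assms(1,2) by (auto simp: indep_sets_def)
  ultimately show False using assms(3) by simp
qed

lemma card_le_vplus_vminus_vpm: "card S \<le> vplus E S + vminus E S + vpm E S"
  for E :: "('v::finite \<times> 'v) set"
proof -
  let ?A = "{v\<in>S. \<nexists>u. (u, v) \<in> E}"
  let ?B = "{v\<in>S. \<nexists>u. (v, u) \<in> E}"
  let ?C = "{v\<in>S. (\<exists>u. (u, v) \<in> E) \<and> (\<exists>u. (v, u) \<in> E)}"
  have "card S \<le> card (?A \<union> ?B \<union> ?C)" by (rule card_mono) auto
  also have "\<dots> \<le> card (?A \<union> ?B) + card ?C" by (rule card_Un_le)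
  also have "\<dots> \<le> card ?A + card ?B + card ?C" using card_Un_le[of ?A ?B] by simp
  finally show ?thesis unfolding vplus_def vminus_def vpm_def .
qed

lemma vplus_vminus_vpm_indep:
  fixes E :: "('v::finite \<times> 'v) set"
  assumes "S \<in> indep_sets E" "0 < maxdeg E"
  shows "vplus E S + vminus E S + vpm E S = card S"
proof -
  let ?A = "{v\<in>S. \<nexists>u. (u, v) \<in> E}"
  let ?B = "{v\<in>S. \<nexists>u. (v, u) \<in> E}"
  let ?C = "{v\<in>S. (\<exists>u. (u, v) \<in> E) \<and> (\<exists>u. (v, u) \<in> E)}"
  have "S = ?A \<union> (?B \<union> ?C)" "?A \<inter> (?B \<union> ?C) = {}" "?B \<inter> ?C = {}"
    using indep_sets_has_neighbour[OF assms(1) _ assms(2)] by blast+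
  then have "card S = card ?A + (card ?B + card ?C)"
    using card_Un_disjoint[of ?A "?B \<union> ?C"] card_Un_disjoint[of ?B ?C] by simp
  then show ?thesis unfolding vplus_def vminus_def vpm_def by simp
qed

lemma card_indep_le_card_neighbours:
  fixes E :: "('v::finite \<times> 'v) set"
  assumes "S \<in> indep_sets E" "0 < maxdeg E"
  shows "card S \<le> card (Nplus E S \<union> Nminus E S)"
proof -
  let ?N = "Nplus E S \<union> Nminus E S"
  have "{e\<in>E. fst e \<in> S \<or> snd e \<in> S} \<subseteq> {e\<in>E. fst e \<in> ?N \<or> snd e \<in> ?N}"
    using assms(1) by (auto simp: indep_sets_def Nplus_def Nminus_def)
  then have "maxdeg E * card S \<le> card {e\<in>E. fst e \<in> ?N \<or> snd e \<in> ?N}"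
    by (simp add: card_incident_edges_indep[OF assms(1), symmetric] card_mono)
  also have "\<dots> \<le> (\<Sum>v\<in>?N. maxdeg E)"
    using card_incident_edges_le sum_mono[OF deg_le_maxdeg] by (rule order_trans)
  finally show ?thesis using assms(2) by (simp add: mult.commute)
qed

section \<open>The polynomial fbar and its level sets\<close>

definition fbar_term :: "('v \<times> 'v) set \<Rightarrow> 'v set \<Rightarrow> real \<Rightarrow> real \<Rightarrow> real \<Rightarrow> real \<Rightarrow> real" where
  "fbar_term E S x1 x2 y1 y2 =
     x1 ^ vplus E S * x2 ^ vminus E S * (min x1 x2) ^ vpm E S
     * y1 ^ card (Nplus E S - Nminus E S) * y2 ^ card (Nminus E S - Nplus E S)
     * (min y1 y2) ^ card (Nplus E S \<inter> Nminus E S)"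

lemma fbar_eq_sum_term: "fbar E x1 x2 y1 y2 = (\<Sum>S\<in>indep_sets E. fbar_term E S x1 x2 y1 y2)"
  unfolding fbar_def fbar_term_def ..

lemma fbar_term_nonneg:
  "0 \<le> x1 \<Longrightarrow> 0 \<le> x2 \<Longrightarrow> 0 \<le> y1 \<Longrightarrow> 0 \<le> y2 \<Longrightarrow> 0 \<le> fbar_term E S x1 x2 y1 y2"
  unfolding fbar_term_def by simp

lemma fbar_eq_1_plus:
  "fbar E x1 x2 y1 y2 = 1 + (\<Sum>S\<in>indep_sets E - {{}}. fbar_term E S x1 x2 y1 y2)"
  for E :: "('v::finite \<times> 'v) set"
proof -
  have "{} \<in> indep_sets E" "fbar_term E {} x1 x2 y1 y2 = 1"
    by (simp_all add: indep_sets_def fbar_term_def vplus_def vminus_def vpm_def Nplus_def Nminus_def)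
  then show ?thesis unfolding fbar_eq_sum_term by (simp add: sum.remove)
qed

lemma fbar_term_scale_x:
  assumes "0 \<le> l"
  shows "fbar_term E S (l * x1) (l * x2) y1 y2
           = l ^ (vplus E S + vminus E S + vpm E S) * fbar_term E S x1 x2 y1 y2"
proof -
  have "min (l * x1) (l * x2) = l * min x1 x2" using assms by (simp add: min_mult_distrib_left)
  then show ?thesis unfolding fbar_term_def by (simp add: power_add power_mult_distrib)
qed

lemma fbar_term_scale_y:
  fixes E :: "('v::finite \<times> 'v) set"
  assumes "0 \<le> l"
  shows "fbar_term E S x1 x2 (l * y1) (l * y2)
           = l ^ card (Nplus E S \<union> Nminus E S) * fbar_term E S x1 x2 y1 y2"
proof -
  let ?P = "Nplus E S" and ?M = "Nminus E S"
  have "?P \<union> ?M = (?P - ?M) \<union> ((?M - ?P) \<union> (?P \<inter> ?M))"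
    "(?P - ?M) \<inter> ((?M - ?P) \<union> (?P \<inter> ?M)) = {}" "(?M - ?P) \<inter> (?P \<inter> ?M) = {}"
    by blast+
  then have "card (?P \<union> ?M) = card (?P - ?M) + card (?M - ?P) + card (?P \<inter> ?M)"
    using card_Un_disjoint[of "?P - ?M"] card_Un_disjoint[of "?M - ?P" "?P \<inter> ?M"] by simp
  moreover have "min (l * y1) (l * y2) = l * min y1 y2" using assms by (simp add: min_mult_distrib_left)
  ultimately show ?thesis unfolding fbar_term_def by (simp add: power_add power_mult_distrib)
qed

lemma fbar_zero_x: "fbar E 0 0 y1 y2 = 1"
  for E :: "('v::finite \<times> 'v) set"
proof -
  have "fbar_term E S 0 0 y1 y2 = 0" if "S \<noteq> {}" for S
  proof -
    have "0 < card S" using that by (simp add: card_gt_0_iff)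
    then have "0 < vplus E S + vminus E S + vpm E S"
      using card_le_vplus_vminus_vpm[of S E] by linarith
    then show ?thesis using fbar_term_scale_x[of 0 E S 1 1 y1 y2] by simp
  qed
  then show ?thesis by (simp add: fbar_eq_1_plus)
qed

lemma fbar_zero_y:
  fixes E :: "('v::finite \<times> 'v) set"
  assumes "0 < maxdeg E"
  shows "fbar E x1 x2 0 0 = 1"
proof -
  have "fbar_term E S x1 x2 0 0 = 0" if "S \<in> indep_sets E - {{}}" for S
  proof -
    have "0 < card S" using that by (simp add: card_gt_0_iff)
    then have "0 < card (Nplus E S \<union> Nminus E S)"
      using card_indep_le_card_neighbours[of S E] that assms by simp
    then show ?thesis using fbar_term_scale_y[of 0 E S x1 x2 1 1] by simp
  qed
  then show ?thesis by (simp add: fbar_eq_1_plus)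
qed

lemma isCont_fbar_ray: "isCont (\<lambda>t. fbar E (t * x1) (t * x2) y1 y2) t"
  for E :: "('v::finite \<times> 'v) set"
  unfolding fbar_eq_sum_term fbar_term_def by (intro continuous_intros)

lemma fbar_ray_crossing:
  fixes E :: "('v::finite \<times> 'v) set"
  assumes "1 \<le> c" "0 \<le> T" "c \<le> fbar E (T * x1) (T * x2) y1 y2"
  obtains t where "0 \<le> t" "t \<le> T" "fbar E (t * x1) (t * x2) y1 y2 = c"
proof -
  have "\<exists>t. 0 \<le> t \<and> t \<le> T \<and> fbar E (t * x1) (t * x2) y1 y2 = c"
    by (rule IVT) (use assms isCont_fbar_ray fbar_zero_x[of E y1 y2] in auto)
  then show ?thesis using that by blast
qed

lemma fbar_rebalance_ge:
  fixes E :: "('v::finite \<times> 'v) set"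
  assumes "0 < maxdeg E" "0 < m" "m \<le> 1" "0 \<le> x1" "0 \<le> x2" "0 \<le> y1" "0 \<le> y2"
  shows "fbar E x1 x2 y1 y2 \<le> fbar E (m * x1) (m * x2) (y1 / m) (y2 / m)"
  unfolding fbar_eq_sum_term
proof (rule sum_mono)
  fix S assume S: "S \<in> indep_sets E"
  let ?N = "card (Nplus E S \<union> Nminus E S)"
  have "1 = m ^ card S * (1 / m) ^ card S" using assms(2) by (simp add: power_one_over)
  also have "\<dots> \<le> m ^ card S * (1 / m) ^ ?N"
    using card_indep_le_card_neighbours[OF S assms(1)] assms(2,3)
    by (intro mult_left_mono power_increasing) simp_all
  finally have "1 * fbar_term E S x1 x2 y1 y2
      \<le> m ^ card S * (1 / m) ^ ?N * fbar_term E S x1 x2 y1 y2"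
    by (rule mult_right_mono) (rule fbar_term_nonneg[OF assms(4-7)])
  then have "fbar_term E S x1 x2 y1 y2
      \<le> m ^ card S * (1 / m) ^ ?N * fbar_term E S x1 x2 y1 y2"
    by simp
  also have "\<dots> = fbar_term E S (m * x1) (m * x2) ((1 / m) * y1) ((1 / m) * y2)"
    using assms(2) vplus_vminus_vpm_indep[OF S assms(1)]
    by (subst fbar_term_scale_y, simp, subst fbar_term_scale_x) (simp_all add: mult_ac)
  finally show "fbar_term E S x1 x2 y1 y2 \<le> fbar_term E S (m * x1) (m * x2) (y1 / m) (y2 / m)"
    by simp
qed

lemma fbar_scale_x_ge:
  fixes E :: "('v::finite \<times> 'v) set"
  assumes "1 \<le> l" "0 \<le> x1" "0 \<le> x2" "0 \<le> y1" "0 \<le> y2"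
  shows "1 + l * (fbar E x1 x2 y1 y2 - 1) \<le> fbar E (l * x1) (l * x2) y1 y2"
proof -
  have term_ge: "l * fbar_term E S x1 x2 y1 y2 \<le> fbar_term E S (l * x1) (l * x2) y1 y2"
    if "S \<in> indep_sets E - {{}}" for S
  proof -
    have "0 < card S" using that by (simp add: card_gt_0_iff)
    then have "l ^ 1 \<le> l ^ (vplus E S + vminus E S + vpm E S)"
      using card_le_vplus_vminus_vpm[of S E] assms(1) by (intro power_increasing) simp_all
    then have "l * fbar_term E S x1 x2 y1 y2
        \<le> l ^ (vplus E S + vminus E S + vpm E S) * fbar_term E S x1 x2 y1 y2"
      using fbar_term_nonneg[OF assms(2-5)] by (intro mult_right_mono) simp_all
    then show ?thesis using assms(1) by (simp add: fbar_term_scale_x)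
  qed
  then have "l * (\<Sum>S\<in>indep_sets E - {{}}. fbar_term E S x1 x2 y1 y2)
      \<le> (\<Sum>S\<in>indep_sets E - {{}}. fbar_term E S (l * x1) (l * x2) y1 y2)"
    unfolding sum_distrib_left by (intro sum_mono term_ge)
  then show ?thesis by (simp add: fbar_eq_1_plus)
qed

lemma fbar_edgeless:
  assumes "E = {}"
  shows "fbar E x1 x2 y1 y2 = (\<Sum>S\<in>indep_sets E. (x1 * x2) ^ card S)"
  unfolding assms fbar_eq_sum_term fbar_term_def vplus_def vminus_def vpm_def Nplus_def Nminus_def
  by (simp add: power_mult_distrib)

lemma exists_fbar_diagonal_level:
  fixes E :: "('v::finite \<times> 'v) set"
  assumes "digraph E" "0 < maxdeg E" "1 \<le> c"
  obtains x where "0 \<le> x" "fbar E x x 1 1 = c"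
proof -
  obtain v where v: "deg E v = maxdeg E" using maxdeg_attained by blast
  then have v_indep: "{v} \<in> indep_sets E - {{}}"
    using assms(1) by (simp add: indep_sets_def digraph_def)
  have "c = c ^ (vplus E {v} + vminus E {v} + vpm E {v}) * fbar_term E {v} 1 1 1 1"
    using vplus_vminus_vpm_indep[of "{v}" E] v_indep assms(2) by (simp add: fbar_term_def)
  also have "\<dots> = fbar_term E {v} (c * 1) (c * 1) 1 1"
    using assms(3) by (simp only: fbar_term_scale_x)
  also have "\<dots> \<le> (\<Sum>S\<in>indep_sets E - {{}}. fbar_term E S (c * 1) (c * 1) 1 1)"
    using v_indep assms(3) by (intro member_le_sum fbar_term_nonneg) simp_all
  finally have "c \<le> fbar E (c * 1) (c * 1) 1 1" by (simp add: fbar_eq_1_plus)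
  then obtain t where "0 \<le> t" "fbar E (t * 1) (t * 1) 1 1 = c"
    using fbar_ray_crossing[of c c E 1 1 1 1] assms(3) by auto
  then show ?thesis using that by simp
qed

definition fbar_costs :: "('v \<times> 'v) set \<Rightarrow> real \<Rightarrow> real set" where
  "fbar_costs E c = {x1 * y1 + x2 * y2 | x1 x2 y1 y2.
     0 \<le> x1 \<and> 0 \<le> x2 \<and> 0 \<le> y1 \<and> y1 \<le> 1 \<and> 0 \<le> y2 \<and> y2 \<le> 1 \<and> fbar E x1 x2 y1 y2 = c}"

definition fbar_costs_normalized :: "('v \<times> 'v) set \<Rightarrow> real \<Rightarrow> real set" where
  "fbar_costs_normalized E c = {x1 * y1 + x2 * y2 | x1 x2 y1 y2.
     0 \<le> x1 \<and> 0 \<le> x2 \<and> 0 \<le> y1 \<and> y1 \<le> 1 \<and> 0 \<le> y2 \<and> y2 \<le> 1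
     \<and> max y1 y2 = 1 \<and> fbar E x1 x2 y1 y2 = c}"

lemma fbar_costsI:
  "0 \<le> x1 \<Longrightarrow> 0 \<le> x2 \<Longrightarrow> 0 \<le> y1 \<Longrightarrow> y1 \<le> 1 \<Longrightarrow> 0 \<le> y2 \<Longrightarrow> y2 \<le> 1 \<Longrightarrow>
   fbar E x1 x2 y1 y2 = c \<Longrightarrow> x1 * y1 + x2 * y2 \<in> fbar_costs E c"
  unfolding fbar_costs_def by blast

lemma fbar_costsE:
  assumes "r \<in> fbar_costs E c"
  obtains x1 x2 y1 y2 where "r = x1 * y1 + x2 * y2" "0 \<le> x1" "0 \<le> x2" "0 \<le> y1" "y1 \<le> 1"
    "0 \<le> y2" "y2 \<le> 1" "fbar E x1 x2 y1 y2 = c"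
  using assms unfolding fbar_costs_def by blast

lemma fbar_costs_normalizedI:
  "0 \<le> x1 \<Longrightarrow> 0 \<le> x2 \<Longrightarrow> 0 \<le> y1 \<Longrightarrow> y1 \<le> 1 \<Longrightarrow> 0 \<le> y2 \<Longrightarrow> y2 \<le> 1 \<Longrightarrow>
   max y1 y2 = 1 \<Longrightarrow> fbar E x1 x2 y1 y2 = c \<Longrightarrow> x1 * y1 + x2 * y2 \<in> fbar_costs_normalized E c"
  unfolding fbar_costs_normalized_def by blast

lemma fbar_costs_nonneg: "r \<in> fbar_costs E c \<Longrightarrow> 0 \<le> r"
  by (auto elim: fbar_costsE)

lemma exists_fbar_costs_normalized_le:
  fixes E :: "('v::finite \<times> 'v) set"
  assumes "0 < maxdeg E" "1 < c" "0 \<le> x1" "0 \<le> x2" "0 \<le> y1" "y1 \<le> 1" "0 \<le> y2" "y2 \<le> 1"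
    and level: "fbar E x1 x2 y1 y2 = c"
  shows "\<exists>r\<in>fbar_costs_normalized E c. r \<le> x1 * y1 + x2 * y2"
proof -
  define m where "m = max y1 y2"
  have "m \<noteq> 0"
  proof
    assume "m = 0"
    then have "y1 = 0" "y2 = 0" using assms(5,7) unfolding m_def by linarith+
    then show False using level fbar_zero_y[OF assms(1)] assms(2) by simp
  qed
  then have m: "0 < m" "m \<le> 1" using assms(5-8) unfolding m_def by linarith+
  have "c \<le> fbar E (1 * (m * x1)) (1 * (m * x2)) (y1 / m) (y2 / m)"
    using fbar_rebalance_ge[OF assms(1) m assms(3,4,5,7)] level by simp
  then obtain t where t: "0 \<le> t" "t \<le> 1" "fbar E (t * (m * x1)) (t * (m * x2)) (y1 / m) (y2 / m) = c"
    using fbar_ray_crossing[OF less_imp_le[OF assms(2)] zero_le_one] by blast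
  have "max (y1 / m) (y2 / m) = 1" "y1 / m \<le> 1" "y2 / m \<le> 1"
    using m assms(5,7) unfolding m_def by (auto simp: max_def divide_le_eq)
  then have "(t * (m * x1)) * (y1 / m) + (t * (m * x2)) * (y2 / m) \<in> fbar_costs_normalized E c"
    using t m assms(3-5,7) by (intro fbar_costs_normalizedI) simp_all
  moreover have "(t * (m * x1)) * (y1 / m) + (t * (m * x2)) * (y2 / m) = t * (x1 * y1 + x2 * y2)"
    using m by (simp add: field_simps)
  moreover have "t * (x1 * y1 + x2 * y2) \<le> x1 * y1 + x2 * y2"
    using t assms(3-5,7) by (simp add: mult_left_le_one_le)
  ultimately show ?thesis by (intro bexI) simp_all
qed

lemma fbar_costs_normalized_edgeless:
  fixes E :: "('v \<times> 'v) set"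
  assumes "E = {}" "r \<in> fbar_costs E c" "0 < \<epsilon>"
  shows "\<epsilon> \<in> fbar_costs_normalized E c"
proof -
  obtain x1 x2 y1 y2 where x: "0 \<le> x1" "0 \<le> x2" and level: "fbar E x1 x2 y1 y2 = c"
    using assms(2) by (auto elim: fbar_costsE)
  have "fbar E \<epsilon> (x1 * x2 / \<epsilon>) 1 0 = fbar E x1 x2 y1 y2"
    using assms(3) by (simp add: fbar_edgeless[OF assms(1)])
  then have "\<epsilon> * 1 + (x1 * x2 / \<epsilon>) * 0 \<in> fbar_costs_normalized E c"
    using assms(3) x level by (intro fbar_costs_normalizedI) simp_all
  then show ?thesis by simp
qed

lemma cInf_eq_if_approximable:
  fixes L R :: "real set"
  assumes "R \<subseteq> L" "bdd_below L" and approx: "\<And>l \<epsilon>. l \<in> L \<Longrightarrow> 0 < \<epsilon> \<Longrightarrow> \<exists>r\<in>R. r < l + \<epsilon>"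
  shows "Inf L = Inf R"
proof (cases "L = {}")
  case False
  then have "R \<noteq> {}" using approx[of _ 1] by fastforce
  have "Inf R \<le> Inf L + \<epsilon>" if \<epsilon>: "0 < \<epsilon>" for \<epsilon>
  proof -
    obtain l where "l \<in> L" "l < Inf L + \<epsilon> / 2"
      using cInf_lessD[OF False, of "Inf L + \<epsilon> / 2"] \<epsilon> by auto
    moreover obtain r where "r \<in> R" "r < l + \<epsilon> / 2"
      using approx[OF \<open>l \<in> L\<close>, of "\<epsilon> / 2"] \<epsilon> by auto
    moreover have "bdd_below R" using assms(2,1) by (rule bdd_below_mono)
    ultimately show ?thesis using cInf_lower[of r R] by linarith
  qed
  then have "Inf R \<le> Inf L" by (rule field_le_epsilon)
  moreover have "Inf L \<le> Inf R" using cInf_superset_mono[OF \<open>R \<noteq> {}\<close> assms(2,1)] .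
  ultimately show ?thesis by simp
qed (use assms(1) in simp)

lemma Inf_fbar_costs_normalized:
  fixes E :: "('v::finite \<times> 'v) set"
  assumes "1 < c"
  shows "Inf (fbar_costs E c) = Inf (fbar_costs_normalized E c)"
proof (rule cInf_eq_if_approximable)
  show "fbar_costs_normalized E c \<subseteq> fbar_costs E c"
    unfolding fbar_costs_def fbar_costs_normalized_def by blast
  show "bdd_below (fbar_costs E c)"
    using fbar_costs_nonneg by (intro bdd_belowI[of _ 0]) blast
next
  fix l \<epsilon> :: real assume l: "l \<in> fbar_costs E c" and \<epsilon>: "0 < \<epsilon>"
  show "\<exists>r\<in>fbar_costs_normalized E c. r < l + \<epsilon>"
  proof (cases "E = {}")
    case True
    then have "\<epsilon> / 2 \<in> fbar_costs_normalized E c"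
      using l \<epsilon> by (intro fbar_costs_normalized_edgeless) simp_all
    then show ?thesis using fbar_costs_nonneg[OF l] \<epsilon> by (intro bexI[of _ "\<epsilon> / 2"]) simp_all
  next
    case False
    obtain x1 x2 y1 y2 where l_eq: "l = x1 * y1 + x2 * y2"
      and feasible: "0 \<le> x1" "0 \<le> x2" "0 \<le> y1" "y1 \<le> 1" "0 \<le> y2" "y2 \<le> 1" "fbar E x1 x2 y1 y2 = c"
      using l by (rule fbar_costsE)
    obtain r where "r \<in> fbar_costs_normalized E c" "r \<le> l"
      using exists_fbar_costs_normalized_le[OF maxdeg_pos[OF False] assms feasible] unfolding l_eq by blast
    then show ?thesis using \<epsilon> by (intro bexI[of _ r]) simp_all
  qed
qed

lemma tendsto_nat_ceiling_minus_div:
  assumes "\<forall>\<^sub>F n in F. 0 < r n" "((\<lambda>n. 1 / r n) \<longlongrightarrow> 0) F" "0 \<le> c"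
  shows "((\<lambda>n. real (nat \<lceil>c * r n\<rceil> - k) / r n) \<longlongrightarrow> c) F"
proof (rule tendsto_sandwich)
  show "\<forall>\<^sub>F n in F. c - real k * (1 / r n) \<le> real (nat \<lceil>c * r n\<rceil> - k) / r n"
    using assms(1)
  proof eventually_elim
    case (elim n)
    have "c * r n - real k \<le> real (nat \<lceil>c * r n\<rceil> - k)" by linarith
    then have "(c * r n - real k) / r n \<le> real (nat \<lceil>c * r n\<rceil> - k) / r n"
      using elim by (simp add: divide_right_mono)
    then show ?case using elim by (simp add: field_simps)
  qed
  show "\<forall>\<^sub>F n in F. real (nat \<lceil>c * r n\<rceil> - k) / r n \<le> c + 1 / r n"
    using assms(1)
  proof eventually_elim
    case (elim n)
    have "0 \<le> c * r n" using assms(3) elim by simp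
    then have "real (nat \<lceil>c * r n\<rceil>) \<le> c * r n + 1" by linarith
    then have "real (nat \<lceil>c * r n\<rceil> - k) \<le> c * r n + 1" by (meson of_nat_le_iff diff_le_self order_trans)
    then have "real (nat \<lceil>c * r n\<rceil> - k) / r n \<le> (c * r n + 1) / r n"
      using elim by (simp add: divide_right_mono)
    then show ?case using elim by (simp add: field_simps)
  qed
  show "((\<lambda>n. c - real k * (1 / r n)) \<longlongrightarrow> c) F"
    using tendsto_diff[OF tendsto_const tendsto_mult[OF tendsto_const assms(2)], of c "real k"] by simp
  show "((\<lambda>n. c + 1 / r n) \<longlongrightarrow> c) F"
    using tendsto_add[OF tendsto_const assms(2), of c] by simp
qed

lemma tendsto_nat_floor_minus_div:
  assumes "(\<lambda>n. real (a n) / real n) \<longlonglongrightarrow> 0" "\<forall>\<^sub>F n in sequentially. a n \<le> n" "0 \<le> y"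
  shows "(\<lambda>n. real (nat \<lfloor>y * real (n - a n)\<rfloor> - k) / real n) \<longlonglongrightarrow> y"
proof (rule tendsto_sandwich)
  have ev: "\<forall>\<^sub>F n in sequentially. a n \<le> n \<and> 0 < n"
    using assms(2) eventually_gt_at_top[of 0] by eventually_elim simp
  show "\<forall>\<^sub>F n in sequentially. y - y * (real (a n) / real n) - (1 + real k) * (1 / real n)
      \<le> real (nat \<lfloor>y * real (n - a n)\<rfloor> - k) / real n"
    using ev
  proof eventually_elim
    case (elim n)
    have "y * real (n - a n) - 1 - real k \<le> real (nat \<lfloor>y * real (n - a n)\<rfloor> - k)" by linarith
    then have "(y * real (n - a n) - 1 - real k) / real n \<le> real (nat \<lfloor>y * real (n - a n)\<rfloor> - k) / real n"
      by (simp add: divide_right_mono)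
    moreover have "real (n - a n) = real n - real (a n)" using elim by simp
    then have "(y * real (n - a n) - 1 - real k) / real n
        = y - y * (real (a n) / real n) - (1 + real k) * (1 / real n)"
      using elim by (simp add: field_simps)
    ultimately show ?case by simp
  qed
  show "\<forall>\<^sub>F n in sequentially. real (nat \<lfloor>y * real (n - a n)\<rfloor> - k) / real n \<le> y"
    using ev
  proof eventually_elim
    case (elim n)
    have "y * real (n - a n) \<le> y * real n" using assms(3) by (simp add: mult_left_mono)
    moreover have "0 \<le> y * real (n - a n)" using assms(3) by simp
    ultimately have "real (nat \<lfloor>y * real (n - a n)\<rfloor> - k) \<le> y * real n" by linarith
    then show ?case using elim by (simp add: divide_le_eq)
  qed
  have "(\<lambda>n. 1 / real n) \<longlonglongrightarrow> 0" using lim_const_over_n[of 1] by simp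
  then show "(\<lambda>n. y - y * (real (a n) / real n) - (1 + real k) * (1 / real n)) \<longlonglongrightarrow> y"
    using tendsto_diff[OF tendsto_diff[OF tendsto_const tendsto_mult[OF tendsto_const assms(1)]]
        tendsto_mult[OF tendsto_const]] by fastforce
qed (rule tendsto_const)

lemma tendsto_max_nat_ceiling_div:
  fixes r :: "nat \<Rightarrow> real"
  assumes r: "\<forall>\<^sub>F n in sequentially. 0 < r n" "(\<lambda>n. 1 / r n) \<longlonglongrightarrow> 0" "(\<lambda>n. r n / real n) \<longlonglongrightarrow> 0"
    and "0 \<le> x1" "0 \<le> x2"
  shows "(\<lambda>n. real (max (nat \<lceil>x1 * r n\<rceil>) (nat \<lceil>x2 * r n\<rceil>)) / real n) \<longlonglongrightarrow> 0"
proof -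
  have "\<forall>\<^sub>F n in sequentially. max (nat \<lceil>x1 * r n\<rceil>) (nat \<lceil>x2 * r n\<rceil>) = nat \<lceil>max x1 x2 * r n\<rceil>"
    using r(1)
  proof eventually_elim
    case (elim n)
    then have "mono (\<lambda>x. nat \<lceil>x * r n\<rceil>)"
      by (auto intro!: monoI nat_mono ceiling_mono mult_right_mono)
    then show ?case by (rule max_of_mono)
  qed
  then have "\<forall>\<^sub>F n in sequentially. real (nat \<lceil>max x1 x2 * r n\<rceil> - 0) / r n * (r n / real n)
      = real (max (nat \<lceil>x1 * r n\<rceil>) (nat \<lceil>x2 * r n\<rceil>)) / real n"
    using r(1) by eventually_elim simp
  moreover have "(\<lambda>n. real (nat \<lceil>max x1 x2 * r n\<rceil> - 0) / r n * (r n / real n)) \<longlonglongrightarrow> max x1 x2 * 0"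
    using assms(4,5) by (intro tendsto_mult tendsto_nat_ceiling_minus_div r(1,2,3)) simp
  ultimately show ?thesis by (simp add: Lim_transform_eventually)
qed

lemma nat_floor_mult_le: "y \<le> 1 \<Longrightarrow> nat \<lfloor>y * real m\<rfloor> \<le> m"
proof -
  assume "y \<le> 1"
  then have "y * real m < real m + 1" using mult_right_mono[of y 1 "real m"] by simp
  then show ?thesis by (simp add: nat_le_iff floor_le_iff)
qed

lemma eventually_prob_range:
  fixes p :: "nat \<Rightarrow> real"
  assumes "\<forall>\<^sub>F n in sequentially. 0 < p n" "p \<longlonglongrightarrow> 0"
  shows "\<forall>\<^sub>F n in sequentially. 0 < p n \<and> p n < 1 \<and> 0 < n"
  using assms(1) order_tendstoD(2)[OF assms(2) zero_less_one] eventually_gt_at_top[of 0]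
  by eventually_elim simp

lemma smallo_powr_imp_exponent_pos:
  fixes p :: "nat \<Rightarrow> real"
  assumes "\<forall>\<^sub>F n in sequentially. 0 < p n" "p \<longlonglongrightarrow> 0" "(\<lambda>n. real n powr (- c / real D)) \<in> o(p)"
  shows "0 < D"
proof (rule ccontr)
  assume "\<not> 0 < D"
  then have "D = 0" by simp
  have "\<forall>\<^sub>F n in sequentially. real n powr (- c / real D) = 1"
    using eventually_gt_at_top[of "0::nat"] by eventually_elim (simp add: \<open>D = 0\<close>)
  then have "\<forall>\<^sub>F n in sequentially. real n powr (- c / real D) / p n = 1 / p n"
    by eventually_elim simp
  then have "(\<lambda>n. 1 / p n) \<longlonglongrightarrow> 0"
    using smalloD_tendsto[OF assms(3)] by (rule Lim_transform_eventually[rotated])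
  then have "(\<lambda>n. p n * (1 / p n)) \<longlonglongrightarrow> 0 * 0" by (intro tendsto_mult assms(2))
  moreover have "\<forall>\<^sub>F n in sequentially. p n * (1 / p n) = 1"
    using assms(1) by eventually_elim simp
  ultimately have "(\<lambda>n. 1::real) \<longlonglongrightarrow> 0" by (simp add: Lim_transform_eventually)
  then show False by (simp add: LIMSEQ_const_iff)
qed

lemma smallo_powr_imp_tendsto_zero:
  fixes p :: "nat \<Rightarrow> real"
  assumes "\<forall>\<^sub>F n in sequentially. 0 < p n" "(\<lambda>n. real n powr (- c / real D)) \<in> o(p)" "0 < c" "0 < D"
  shows "(\<lambda>n. 1 / (real n * p n powr (real D / c))) \<longlonglongrightarrow> 0"
proof -
  let ?h = "\<lambda>n. real n powr (- c / real D) / p n"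
  have "(\<lambda>n. ?h n powr (real D / c)) \<longlonglongrightarrow> 0"
    using smalloD_tendsto[OF assms(2)] assms(1,3,4)
    by (intro tendsto_zero_powrI[OF _ tendsto_const]) (auto elim: eventually_mono)
  moreover have "\<forall>\<^sub>F n in sequentially. ?h n powr (real D / c) = 1 / (real n * p n powr (real D / c))"
    using assms(1) eventually_gt_at_top[of "0::nat"]
  proof eventually_elim
    case (elim n)
    have "(real n powr (- c / real D)) powr (real D / c) = real n powr (-1)"
      using assms(3,4) by (simp add: powr_powr)
    then show ?case using elim by (simp add: powr_divide powr_minus_divide powr_mult)
  qed
  ultimately show ?thesis by (simp add: Lim_transform_eventually)
qed

lemma tendsto_scale_n_powr:
  fixes p :: "nat \<Rightarrow> real"
  assumes p: "\<forall>\<^sub>F n in sequentially. 0 < p n" "p \<longlonglongrightarrow> 0"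
    and sparse: "(\<lambda>n. real n powr (- c / real D)) \<in> o(p)" and "0 < c"
  shows "\<forall>\<^sub>F n in sequentially. 0 < real n * p n powr (real D / c)"
    and "(\<lambda>n. 1 / (real n * p n powr (real D / c))) \<longlonglongrightarrow> 0"
    and "(\<lambda>n. real n * p n powr (real D / c) / real n) \<longlonglongrightarrow> 0"
proof -
  have "0 < D" by (rule smallo_powr_imp_exponent_pos[OF p sparse])
  show "\<forall>\<^sub>F n in sequentially. 0 < real n * p n powr (real D / c)"
    using p(1) eventually_gt_at_top[of 0] by eventually_elim simp
  show "(\<lambda>n. 1 / (real n * p n powr (real D / c))) \<longlonglongrightarrow> 0"
    by (rule smallo_powr_imp_tendsto_zero[OF p(1) sparse assms(4) \<open>0 < D\<close>])
  have "(\<lambda>n. p n powr (real D / c)) \<longlonglongrightarrow> 0"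
    using p \<open>0 < D\<close> assms(4) by (intro tendsto_zero_powrI[OF _ tendsto_const]) (auto elim: eventually_mono)
  moreover have "\<forall>\<^sub>F n in sequentially. p n powr (real D / c) = real n * p n powr (real D / c) / real n"
    using eventually_gt_at_top[of 0] by eventually_elim simp
  ultimately show "(\<lambda>n. real n * p n powr (real D / c) / real n) \<longlonglongrightarrow> 0"
    by (rule Lim_transform_eventually)
qed

lemma tendsto_scale_n_power:
  fixes p :: "nat \<Rightarrow> real"
  assumes p: "\<forall>\<^sub>F n in sequentially. 0 < p n" "p \<longlonglongrightarrow> 0"
    and sparse: "(\<lambda>n. real n powr (- 1 / real D)) \<in> o(p)"
  shows "\<forall>\<^sub>F n in sequentially. 0 < real n * p n ^ D"
    and "(\<lambda>n. 1 / (real n * p n ^ D)) \<longlonglongrightarrow> 0"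
    and "(\<lambda>n. real n * p n ^ D / real n) \<longlonglongrightarrow> 0"
proof -
  note scale = tendsto_scale_n_powr[OF p sparse zero_less_one]
  have eq: "\<forall>\<^sub>F n in sequentially. real n * p n powr (real D / 1) = real n * p n ^ D"
    using p(1) by eventually_elim (simp add: powr_realpow)
  show "\<forall>\<^sub>F n in sequentially. 0 < real n * p n ^ D"
    using scale(1) eq by eventually_elim linarith
  have "\<forall>\<^sub>F n in sequentially. 1 / (real n * p n powr (real D / 1)) = 1 / (real n * p n ^ D)"
    using eq by eventually_elim (simp only:)
  with scale(2) show "(\<lambda>n. 1 / (real n * p n ^ D)) \<longlonglongrightarrow> 0"
    by (rule Lim_transform_eventually)
  have "\<forall>\<^sub>F n in sequentially. real n * p n powr (real D / 1) / real n = real n * p n ^ D / real n"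
    using eq by eventually_elim (simp only:)
  with scale(3) show "(\<lambda>n. real n * p n ^ D / real n) \<longlonglongrightarrow> 0"
    by (rule Lim_transform_eventually)
qed

lemma eventually_le_of_tendsto_div_zero:
  assumes "(\<lambda>n. real (a n) / real n) \<longlonglongrightarrow> 0"
  shows "\<forall>\<^sub>F n in sequentially. a n \<le> n"
  using order_tendstoD(2)[OF assms zero_less_one] eventually_gt_at_top[of 0]
  by eventually_elim (simp add: divide_less_eq)

lemma exists_power_above_close:
  fixes \<delta> \<epsilon> :: real
  assumes "0 < \<delta>" "0 < k" "0 < \<epsilon>"
  obtains c where "0 < c" "\<delta> < c ^ k" "c ^ 2 < \<delta> powr (2 / real k) + \<epsilon>"
proof -
  define c0 where "c0 = \<delta> powr (1 / real k)"
  have c0: "0 < c0" "c0 ^ k = \<delta>" "c0 ^ 2 = \<delta> powr (2 / real k)"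
    using assms unfolding c0_def by (simp_all add: powr_power)
  have "((\<lambda>c. c ^ 2) \<longlongrightarrow> c0 ^ 2) (at_right c0)"
    by (intro tendsto_intros)
  then have "\<forall>\<^sub>F c in at_right c0. c ^ 2 < c0 ^ 2 + \<epsilon>"
    using order_tendstoD(2)[of "\<lambda>c. c ^ 2" "c0 ^ 2" _ "c0 ^ 2 + \<epsilon>"] assms(3) by simp
  moreover have "\<forall>\<^sub>F c in at_right c0. c0 < c" by (rule eventually_at_right_less)
  ultimately have "\<forall>\<^sub>F c in at_right c0. c0 < c \<and> c ^ 2 < c0 ^ 2 + \<epsilon>" by eventually_elim simp
  then obtain c where "c0 < c" "c ^ 2 < c0 ^ 2 + \<epsilon>"
    using eventually_happens'[of "at_right c0"] by auto
  moreover have "c0 ^ k < c ^ k" using \<open>c0 < c\<close> c0(1) assms(2) by (intro power_strict_mono) simp_all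
  ultimately show ?thesis using c0 by (intro that[of c]) simp_all
qed

section \<open>A planted clique: regular digraphs\<close>

lemma hom_density_clique_ge:
  fixes E :: "('v::finite \<times> 'v) set"
  assumes "digraph E" "0 \<le> p" "p \<le> 1" "s \<le> n"
  shows "(real (s - card (UNIV::'v set)) ^ card (UNIV::'v set)
            + p ^ card E * real (n - s - card (UNIV::'v set)) ^ card (UNIV::'v set))
           / real n ^ card (UNIV::'v set)
         \<le> hom_density E n (planted p ({..<s} \<times> {..<s}))"
proof -
  let ?k = "card (UNIV::'v set)"
  define T where "T b v = (if b then {..<s} else {s..<n})" for b :: bool and v :: 'v
  define m where "m b = (if b then 0 else card E)" for b :: bool
  have "(\<Sum>b\<in>UNIV. real (\<Prod>v\<in>UNIV. card (T b v) - ?k) * p ^ m b) / real n ^ ?k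
      \<le> hom_density E n (planted p ({..<s} \<times> {..<s}))"
  proof (rule hom_density_planted_ge[OF assms(1-3)])
    show "T b v \<subseteq> {..<n}" for b v using assms(4) by (auto simp: T_def)
    show "\<exists>v. T b v \<inter> T b' v = {}" if "b \<noteq> b'" for b b' using that by (auto simp: T_def)
    show "card {e\<in>E. (\<phi> (fst e), \<phi> (snd e)) \<notin> {..<s} \<times> {..<s}} \<le> m b"
      if "\<phi> \<in> Pi\<^sub>E UNIV (T b)" for b \<phi>
    proof (cases b)
      case True
      then have "{e\<in>E. (\<phi> (fst e), \<phi> (snd e)) \<notin> {..<s} \<times> {..<s}} = {}"
        using that by (auto simp: T_def PiE_iff)
      then show ?thesis by (metis card.empty le0)
    qed (simp add: m_def card_mono)
  qed simp
  then show ?thesis by (simp add: UNIV_bool T_def m_def algebra_simps)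
qed

lemma Phi_ratio_clique_le:
  fixes E :: "('v::finite \<times> 'v) set" and p :: real and n :: nat
  defines "k \<equiv> card (UNIV::'v set)" and "r \<equiv> real n * p powr (real (maxdeg E) / 2)"
  assumes E: "digraph E" "regular E (maxdeg E)" and p: "0 < p" "p < 1" "0 < n" and "s \<le> n"
    and dense: "1 + \<delta> < (real (s - k) / r) ^ k + (real (n - s - k) / real n) ^ k"
  shows "Phi E n p \<delta> / (real n ^ 2 * p ^ maxdeg E * ln (1 / p)) \<le> (real s / r) ^ 2"
proof -
  let ?D = "maxdeg E" and ?Q = "planted p ({..<s} \<times> {..<s})"
  have edges: "real (card E) = real k * (real ?D / 2)"
    using regular_handshake[OF E(2)] unfolding k_def by (simp add: field_simps flip: of_nat_mult)
  have "(p powr (real ?D / 2)) ^ k = p powr real (card E)" "(p powr (real ?D / 2)) ^ 2 = p powr real ?D"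
    using p unfolding edges by (simp_all add: powr_power)
  then have r: "(r / real n) ^ k = p ^ card E" "r ^ 2 = real n ^ 2 * p ^ ?D"
    using p unfolding r_def by (simp_all add: powr_realpow power_mult_distrib)
  have "(1 + \<delta>) * p ^ card E \<le> p ^ card E * ((real (s - k) / r) ^ k + (real (n - s - k) / real n) ^ k)"
    using dense p by (simp add: mult.commute)
  also have "\<dots> = (real (s - k) ^ k + p ^ card E * real (n - s - k) ^ k) / real n ^ k"
    using p r(1)[symmetric] by (simp add: r_def field_simps power_divide power_mult_distrib)
  also have "\<dots> \<le> hom_density E n ?Q"
    using hom_density_clique_ge[OF E(1), of p s n] p \<open>s \<le> n\<close> unfolding k_def by simp
  finally have density: "(1 + \<delta>) * p ^ card E \<le> hom_density E n ?Q" .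
  have "Ient_mat p n ?Q \<le> real s ^ 2 * ln (1 / p)"
    using Ient_mat_planted_le[of p "{..<s} \<times> {..<s}" n] p by (simp add: power2_eq_square)
  also have "\<dots> = (real s / r) ^ 2 * (real n ^ 2 * p ^ ?D * ln (1 / p))"
    using p r(2)[symmetric] by (simp add: r_def field_simps power_divide)
  finally have cost: "Ient_mat p n ?Q \<le> (real s / r) ^ 2 * (real n ^ 2 * p ^ ?D * ln (1 / p))" .
  show ?thesis using p by (intro Phi_ratio_le[OF p _ density cost] planted_in_Qset) simp_all
qed

lemma Phi_ratio_clique_eventually_le:
  fixes E :: "('v::finite \<times> 'v) set" and p :: "nat \<Rightarrow> real"
  assumes E: "digraph E" "regular E (maxdeg E)"
    and p: "\<forall>\<^sub>F n in sequentially. 0 < p n" "p \<longlonglongrightarrow> 0"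
    and sparse: "(\<lambda>n. real n powr (- 2 / real (maxdeg E))) \<in> o(p)"
    and c: "0 < c" "\<delta> < c ^ card (UNIV::'v set)" "c ^ 2 < C"
  shows "\<forall>\<^sub>F n in sequentially.
           Phi E n (p n) \<delta> / (real n ^ 2 * p n ^ maxdeg E * ln (1 / p n)) \<le> C"
proof -
  define k where "k = card (UNIV::'v set)"
  define q where "q n = p n powr (real (maxdeg E) / 2)" for n
  define r where "r n = real n * q n" for n
  define s where "s n = nat \<lceil>c * r n\<rceil>" for n
  note scale = tendsto_scale_n_powr[OF p sparse zero_less_numeral, folded q_def r_def]
  have r_pos: "\<forall>\<^sub>F n in sequentially. 0 < r n" and r_inv: "(\<lambda>n. 1 / r n) \<longlonglongrightarrow> 0"
    by (fact scale(1), fact scale(2))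
  have s_lim: "(\<lambda>n. real (s n - j) / r n) \<longlonglongrightarrow> c" for j
    unfolding s_def by (rule tendsto_nat_ceiling_minus_div[OF r_pos r_inv]) (use c(1) in simp)
  have s_small: "(\<lambda>n. real (s n) / real n) \<longlonglongrightarrow> 0"
    using tendsto_max_nat_ceiling_div[OF scale, of c c] c(1) unfolding s_def by simp
  have s_le: "\<forall>\<^sub>F n in sequentially. s n \<le> n"
    by (rule eventually_le_of_tendsto_div_zero[OF s_small])
  have "(\<lambda>n. real (nat \<lfloor>1 * real (n - s n)\<rfloor> - k) / real n) \<longlonglongrightarrow> 1"
    by (rule tendsto_nat_floor_minus_div[OF s_small s_le]) simp
  then have density_lim:
    "(\<lambda>n. (real (s n - k) / r n) ^ k + (real (n - s n - k) / real n) ^ k) \<longlonglongrightarrow> c ^ k + 1 ^ k"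
    by (intro tendsto_intros s_lim) simp
  have ev_density: "\<forall>\<^sub>F n in sequentially.
      1 + \<delta> < (real (s n - k) / r n) ^ k + (real (n - s n - k) / real n) ^ k"
    using order_tendstoD(1)[OF density_lim, of "1 + \<delta>"] c(2) unfolding k_def by simp
  have "(\<lambda>n. (real (s n - 0) / r n) ^ 2) \<longlonglongrightarrow> c ^ 2" by (intro tendsto_intros s_lim)
  then have ev_cost: "\<forall>\<^sub>F n in sequentially. (real (s n) / r n) ^ 2 < C"
    using c(3) by (auto dest: order_tendstoD(2))
  show ?thesis using eventually_prob_range[OF p] s_le ev_density ev_cost
  proof eventually_elim
    case (elim n)
    then have "Phi E n (p n) \<delta> / (real n ^ 2 * p n ^ maxdeg E * ln (1 / p n)) \<le> (real (s n) / r n) ^ 2"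
      unfolding r_def q_def k_def by (intro Phi_ratio_clique_le[OF E]) simp_all
    then show ?case using elim(4) by simp
  qed
qed

lemma Phi_ratio_regular_le:
  fixes E :: "('v::finite \<times> 'v) set" and p :: "nat \<Rightarrow> real"
  assumes "digraph E" "regular E (maxdeg E)" "0 < \<delta>"
    and "\<forall>\<^sub>F n in sequentially. 0 < p n" "p \<longlonglongrightarrow> 0"
    and "(\<lambda>n. real n powr (- 2 / real (maxdeg E))) \<in> o(p)" "0 < \<epsilon>"
  shows "\<forall>\<^sub>F n in sequentially. Phi E n (p n) \<delta> / (real n ^ 2 * p n ^ maxdeg E * ln (1 / p n))
           \<le> \<delta> powr (2 / real (card (UNIV::'v set))) + \<epsilon>"
proof -
  have "0 < card (UNIV::'v set)" by (simp add: finite_UNIV_card_ge_0)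
  then obtain c where "0 < c" "\<delta> < c ^ card (UNIV::'v set)"
    "c ^ 2 < \<delta> powr (2 / real (card (UNIV::'v set))) + \<epsilon>"
    by (rule exists_power_above_close[OF assms(3) _ assms(7)])
  then show ?thesis by (rule Phi_ratio_clique_eventually_le[OF assms(1,2,4,5,6)])
qed

section \<open>Planted hubs: general digraphs\<close>

definition hub_pairs :: "nat \<Rightarrow> nat \<Rightarrow> nat \<Rightarrow> nat \<Rightarrow> (nat \<times> nat) set" where
  "hub_pairs a1 a2 b1 b2 =
     {..<a1} \<times> {max a1 a2..<max a1 a2 + b1} \<union> {max a1 a2..<max a1 a2 + b2} \<times> {..<a2}"

definition hub_range :: "('v \<times> 'v) set \<Rightarrow> 'v set \<Rightarrow> nat \<Rightarrow> nat \<Rightarrow> nat \<Rightarrow> nat \<Rightarrow> nat \<Rightarrow> 'v \<Rightarrow> nat set" where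
  "hub_range E S n a1 a2 b1 b2 v =
    (if v \<in> S then
       (if \<nexists>u. (u, v) \<in> E then {..<a1} else if \<nexists>u. (v, u) \<in> E then {..<a2} else {..<min a1 a2})
     else if v \<in> Nplus E S \<inter> Nminus E S then {max a1 a2..<max a1 a2 + min b1 b2}
     else if v \<in> Nplus E S then {max a1 a2..<max a1 a2 + b1}
     else if v \<in> Nminus E S then {max a1 a2..<max a1 a2 + b2}
     else {max a1 a2..<n})"

lemma card_hub_pairs_le: "card (hub_pairs a1 a2 b1 b2) \<le> a1 * b1 + b2 * a2"
  unfolding hub_pairs_def by (rule order_trans[OF card_Un_le]) (simp add: card_cartesian_product)

lemma hub_range_subset: "max a1 a2 + max b1 b2 \<le> n \<Longrightarrow> hub_range E S n a1 a2 b1 b2 v \<subseteq> {..<n}"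
  unfolding hub_range_def by auto

lemma card_edges_outside_hub_pairs_le:
  fixes E :: "('v::finite \<times> 'v) set"
  assumes S: "S \<in> indep_sets E" and \<phi>: "\<phi> \<in> Pi\<^sub>E UNIV (hub_range E S n a1 a2 b1 b2)"
  shows "card {e\<in>E. (\<phi> (fst e), \<phi> (snd e)) \<notin> hub_pairs a1 a2 b1 b2} \<le> card E - maxdeg E * card S"
proof -
  let ?incident = "{e\<in>E. fst e \<in> S \<or> snd e \<in> S}"
  have range: "\<phi> v \<in> hub_range E S n a1 a2 b1 b2 v" for v using \<phi> by (auto simp: PiE_iff)
  have "(\<phi> u, \<phi> w) \<in> hub_pairs a1 a2 b1 b2" if uw: "(u, w) \<in> E" "u \<in> S \<or> w \<in> S" for u w
  proof (cases "u \<in> S")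
    case True
    then have "w \<notin> S" "w \<in> Nplus E S" using S uw by (auto simp: indep_sets_def Nplus_def)
    then show ?thesis
      using range[of u] range[of w] True uw(1) by (auto simp: hub_range_def hub_pairs_def split: if_splits)
  next
    case False
    then have "w \<in> S" "u \<in> Nminus E S" using uw by (auto simp: Nminus_def)
    then show ?thesis
      using range[of u] range[of w] False uw(1) by (auto simp: hub_range_def hub_pairs_def split: if_splits)
  qed
  then have "{e\<in>E. (\<phi> (fst e), \<phi> (snd e)) \<notin> hub_pairs a1 a2 b1 b2} \<subseteq> E - ?incident" by auto
  then have "card {e\<in>E. (\<phi> (fst e), \<phi> (snd e)) \<notin> hub_pairs a1 a2 b1 b2} \<le> card (E - ?incident)"
    by (simp add: card_mono)
  also have "\<dots> = card E - maxdeg E * card S"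
    using card_incident_edges_indep[OF S] by (simp add: card_Diff_subset)
  finally show ?thesis .
qed

lemma prod_UNIV_if_mult:
  fixes S :: "'v::finite set"
  shows "(\<Prod>v\<in>UNIV. if v \<in> S then x * y else x) = x ^ card (UNIV::'v set) * y ^ card S"
proof -
  have "(\<Prod>v\<in>UNIV. if v \<in> S then x * y else x) = (\<Prod>v\<in>UNIV. x * (if v \<in> S then y else 1))"
    by (intro prod.cong) simp_all
  also have "\<dots> = x ^ card (UNIV::'v set) * (\<Prod>v\<in>S. y)"
    by (simp add: prod.distrib prod.If_cases Int_absorb1)
  finally show ?thesis by simp
qed

lemma hom_density_hub_ge:
  fixes E :: "('v::finite \<times> 'v) set"
  assumes E: "digraph E" and p: "0 < p" "p \<le> 1" and n: "0 < n"
    and budget: "max a1 a2 + max b1 b2 \<le> n"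
  shows "p ^ card E * (\<Sum>S\<in>indep_sets E. \<Prod>v\<in>UNIV.
            real (card (hub_range E S n a1 a2 b1 b2 v) - card (UNIV::'v set))
            / (if v \<in> S then real n * p ^ maxdeg E else real n))
         \<le> hom_density E n (planted p (hub_pairs a1 a2 b1 b2))"
proof -
  let ?k = "card (UNIV::'v set)"
  let ?N = "\<lambda>S. real (\<Prod>v\<in>UNIV. card (hub_range E S n a1 a2 b1 b2 v) - ?k)"
  have apart: "\<exists>v. hub_range E S n a1 a2 b1 b2 v \<inter> hub_range E S' n a1 a2 b1 b2 v = {}"
    if "S \<noteq> S'" for S S'
  proof -
    obtain v where "v \<in> S \<and> v \<notin> S' \<or> v \<in> S' \<and> v \<notin> S" using \<open>S \<noteq> S'\<close> by blast
    then show ?thesis by (intro exI[of _ v]) (auto simp: hub_range_def)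
  qed
  have "(\<Sum>S\<in>indep_sets E. ?N S * p ^ (card E - maxdeg E * card S)) / real n ^ ?k
      \<le> hom_density E n (planted p (hub_pairs a1 a2 b1 b2))"
    using p hub_range_subset[OF budget] apart card_edges_outside_hub_pairs_le
    by (intro hom_density_planted_ge[OF E]) simp_all
  moreover have "?N S * p ^ (card E - maxdeg E * card S) / real n ^ ?k
      = p ^ card E * (\<Prod>v\<in>UNIV. real (card (hub_range E S n a1 a2 b1 b2 v) - ?k)
                       / (if v \<in> S then real n * p ^ maxdeg E else real n))"
    if S: "S \<in> indep_sets E" for S
  proof -
    have "maxdeg E * card S \<le> card E"
      using card_incident_edges_indep[OF S] card_mono[of E "{e\<in>E. fst e \<in> S \<or> snd e \<in> S}"] by simp
    then have "p ^ card E = p ^ (card E - maxdeg E * card S) * (p ^ maxdeg E) ^ card S"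
      by (simp add: power_mult[symmetric] power_add[symmetric])
    then show ?thesis
      using p n by (simp add: prod_dividef prod_UNIV_if_mult)
  qed
  ultimately show ?thesis by (simp add: sum_divide_distrib sum_distrib_left)
qed

definition vertex_weight :: "('v \<times> 'v) set \<Rightarrow> 'v set \<Rightarrow> real \<Rightarrow> real \<Rightarrow> real \<Rightarrow> real \<Rightarrow> 'v \<Rightarrow> real" where
  "vertex_weight E S x1 x2 y1 y2 v =
     x1 ^ of_bool (v \<in> S \<and> (\<nexists>u. (u, v) \<in> E)) * x2 ^ of_bool (v \<in> S \<and> (\<nexists>u. (v, u) \<in> E))
     * (min x1 x2) ^ of_bool (v \<in> S \<and> (\<exists>u. (u, v) \<in> E) \<and> (\<exists>u. (v, u) \<in> E))
     * y1 ^ of_bool (v \<in> Nplus E S - Nminus E S) * y2 ^ of_bool (v \<in> Nminus E S - Nplus E S)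
     * (min y1 y2) ^ of_bool (v \<in> Nplus E S \<inter> Nminus E S)"

lemma prod_vertex_weight:
  "(\<Prod>v\<in>UNIV. vertex_weight E S x1 x2 y1 y2 v) = fbar_term E S x1 x2 y1 y2"
  for E :: "('v::finite \<times> 'v) set"
proof -
  have pow: "(\<Prod>v\<in>UNIV. c ^ of_bool (P v)) = c ^ card {v. P v}" for c :: real and P :: "'v \<Rightarrow> bool"
    by (simp add: power_sum[symmetric])
  show ?thesis
    unfolding vertex_weight_def prod.distrib pow fbar_term_def vplus_def vminus_def vpm_def
    by (simp only: Collect_mem_eq)
qed

lemma vertex_weight_nonneg:
  "0 \<le> x1 \<Longrightarrow> 0 \<le> x2 \<Longrightarrow> 0 \<le> y1 \<Longrightarrow> 0 \<le> y2 \<Longrightarrow> 0 \<le> vertex_weight E S x1 x2 y1 y2 v"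
  unfolding vertex_weight_def by simp

lemma card_hub_range:
  fixes E :: "('v::finite \<times> 'v) set"
  assumes S: "S \<in> indep_sets E" "0 < maxdeg E" and r: "0 \<le> r"
    and a: "a1 = nat \<lceil>x1 * r\<rceil>" "a2 = nat \<lceil>x2 * r\<rceil>"
    and b: "b1 = nat \<lfloor>y1 * real (n - max a1 a2)\<rfloor>" "b2 = nat \<lfloor>y2 * real (n - max a1 a2)\<rfloor>"
  shows "card (hub_range E S n a1 a2 b1 b2 v) =
           (if v \<in> S then nat \<lceil>vertex_weight E S x1 x2 y1 y2 v * r\<rceil>
            else nat \<lfloor>vertex_weight E S x1 x2 y1 y2 v * real (n - max a1 a2)\<rfloor>)"
proof -
  have mono_a: "mono (\<lambda>x. nat \<lceil>x * r\<rceil>)"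
    using r by (auto intro!: monoI nat_mono ceiling_mono mult_right_mono)
  have mono_b: "mono (\<lambda>y. nat \<lfloor>y * real (n - max a1 a2)\<rfloor>)"
    by (auto intro!: monoI nat_mono floor_mono mult_right_mono)
  have min_a: "min (nat \<lceil>x1 * r\<rceil>) (nat \<lceil>x2 * r\<rceil>) = nat \<lceil>min x1 x2 * r\<rceil>"
    by (rule min_of_mono[OF mono_a])
  have min_b: "min (nat \<lfloor>y1 * real (n - max a1 a2)\<rfloor>) (nat \<lfloor>y2 * real (n - max a1 a2)\<rfloor>)
      = nat \<lfloor>min y1 y2 * real (n - max a1 a2)\<rfloor>"
    by (rule min_of_mono[OF mono_b])
  show ?thesis
  proof (cases "v \<in> S")
    case True
    then have N: "v \<notin> Nplus E S" "v \<notin> Nminus E S" by (auto simp: Nplus_def Nminus_def)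
    consider "\<nexists>u. (u, v) \<in> E" "\<exists>u. (v, u) \<in> E" | "\<exists>u. (u, v) \<in> E" "\<nexists>u. (v, u) \<in> E"
      | "\<exists>u. (u, v) \<in> E" "\<exists>u. (v, u) \<in> E"
      using indep_sets_has_neighbour[OF S(1) True S(2)] by blast
    then show ?thesis
      by cases (simp_all add: True N hub_range_def vertex_weight_def a min_a)
  next
    case False
    consider "v \<in> Nplus E S" "v \<in> Nminus E S" | "v \<in> Nplus E S" "v \<notin> Nminus E S"
      | "v \<notin> Nplus E S" "v \<in> Nminus E S" | "v \<notin> Nplus E S" "v \<notin> Nminus E S"
      by blast
    then show ?thesis
      by cases (simp_all add: False hub_range_def vertex_weight_def b min_b)
  qed
qed

lemma hub_profile_tendsto:
  fixes E :: "('v::finite \<times> 'v) set" and r :: "nat \<Rightarrow> real"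
  assumes S: "S \<in> indep_sets E" "0 < maxdeg E"
    and xy: "0 \<le> x1" "0 \<le> x2" "0 \<le> y1" "0 \<le> y2"
    and r: "\<forall>\<^sub>F n in sequentially. 0 < r n" "(\<lambda>n. 1 / r n) \<longlonglongrightarrow> 0"
    and a: "\<And>n. a1 n = nat \<lceil>x1 * r n\<rceil>" "\<And>n. a2 n = nat \<lceil>x2 * r n\<rceil>"
    and hubs_small: "(\<lambda>n. real (max (a1 n) (a2 n)) / real n) \<longlonglongrightarrow> 0"
      "\<forall>\<^sub>F n in sequentially. max (a1 n) (a2 n) \<le> n"
    and b: "\<And>n. b1 n = nat \<lfloor>y1 * real (n - max (a1 n) (a2 n))\<rfloor>"
      "\<And>n. b2 n = nat \<lfloor>y2 * real (n - max (a1 n) (a2 n))\<rfloor>"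
  shows "(\<lambda>n. \<Prod>v\<in>UNIV. real (card (hub_range E S n (a1 n) (a2 n) (b1 n) (b2 n) v) - card (UNIV::'v set))
                        / (if v \<in> S then r n else real n))
         \<longlonglongrightarrow> fbar_term E S x1 x2 y1 y2"
proof -
  let ?k = "card (UNIV::'v set)" and ?w = "vertex_weight E S x1 x2 y1 y2"
  let ?card = "\<lambda>n v. card (hub_range E S n (a1 n) (a2 n) (b1 n) (b2 n) v)"
  have card: "?card n v = (if v \<in> S then nat \<lceil>?w v * r n\<rceil>
                          else nat \<lfloor>?w v * real (n - max (a1 n) (a2 n))\<rfloor>)"
    if "0 < r n" for n v
    using that by (intro card_hub_range[OF S] a b) simp
  have "(\<lambda>n. real (?card n v - ?k) / (if v \<in> S then r n else real n)) \<longlonglongrightarrow> ?w v" for v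
  proof (cases "v \<in> S")
    case True
    have "(\<lambda>n. real (nat \<lceil>?w v * r n\<rceil> - ?k) / r n) \<longlonglongrightarrow> ?w v"
      using r vertex_weight_nonneg[OF xy] by (rule tendsto_nat_ceiling_minus_div)
    moreover have "\<forall>\<^sub>F n in sequentially.
        real (nat \<lceil>?w v * r n\<rceil> - ?k) / r n = real (?card n v - ?k) / (if v \<in> S then r n else real n)"
      using r(1) by eventually_elim (simp add: True card)
    ultimately show ?thesis by (rule Lim_transform_eventually)
  next
    case False
    have "(\<lambda>n. real (nat \<lfloor>?w v * real (n - max (a1 n) (a2 n))\<rfloor> - ?k) / real n) \<longlonglongrightarrow> ?w v"
      using hubs_small vertex_weight_nonneg[OF xy] by (rule tendsto_nat_floor_minus_div)
    moreover have "\<forall>\<^sub>F n in sequentially.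
        real (nat \<lfloor>?w v * real (n - max (a1 n) (a2 n))\<rfloor> - ?k) / real n
          = real (?card n v - ?k) / (if v \<in> S then r n else real n)"
      using r(1) by eventually_elim (simp add: False card)
    ultimately show ?thesis by (rule Lim_transform_eventually)
  qed
  then show ?thesis unfolding prod_vertex_weight[symmetric] by (rule tendsto_prod)
qed

lemma Phi_ratio_hub_le:
  fixes E :: "('v::finite \<times> 'v) set" and p :: real and n :: nat
  defines "r \<equiv> real n * p ^ maxdeg E"
  assumes E: "digraph E" and p: "0 < p" "p < 1" "0 < n"
    and budget: "max a1 a2 + max b1 b2 \<le> n"
    and dense: "1 + \<delta> < (\<Sum>S\<in>indep_sets E. \<Prod>v\<in>UNIV.
                  real (card (hub_range E S n a1 a2 b1 b2 v) - card (UNIV::'v set))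
                  / (if v \<in> S then r else real n))"
  shows "Phi E n p \<delta> / (real n ^ 2 * p ^ maxdeg E * ln (1 / p))
           \<le> real a1 / r * (real b1 / real n) + real b2 / real n * (real a2 / r)"
proof -
  let ?Q = "planted p (hub_pairs a1 a2 b1 b2)"
  have "(1 + \<delta>) * p ^ card E
      \<le> p ^ card E * (\<Sum>S\<in>indep_sets E. \<Prod>v\<in>UNIV.
           real (card (hub_range E S n a1 a2 b1 b2 v) - card (UNIV::'v set)) / (if v \<in> S then r else real n))"
    using dense p by (simp add: mult.commute)
  also have "\<dots> \<le> hom_density E n ?Q"
    using hom_density_hub_ge[OF E _ _ _ budget, of p] p unfolding r_def by simp
  finally have density: "(1 + \<delta>) * p ^ card E \<le> hom_density E n ?Q" .
  have "Ient_mat p n ?Q \<le> real (card (hub_pairs a1 a2 b1 b2)) * ln (1 / p)"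
    using p by (intro Ient_mat_planted_le) (simp_all add: hub_pairs_def)
  also have "\<dots> \<le> real (a1 * b1 + b2 * a2) * ln (1 / p)"
    using p by (intro mult_right_mono) (simp_all only: of_nat_le_iff card_hub_pairs_le, simp)
  also have "\<dots> = (real a1 / r * (real b1 / real n) + real b2 / real n * (real a2 / r))
      * (real n ^ 2 * p ^ maxdeg E * ln (1 / p))"
    using p by (simp add: r_def field_simps power2_eq_square)
  finally have cost: "Ient_mat p n ?Q \<le> (real a1 / r * (real b1 / real n) + real b2 / real n * (real a2 / r))
      * (real n ^ 2 * p ^ maxdeg E * ln (1 / p))" .
  show ?thesis using p by (intro Phi_ratio_le[OF p _ density cost] planted_in_Qset) simp_all
qed

lemma Phi_ratio_hub_eventually_le:
  fixes E :: "('v::finite \<times> 'v) set" and p :: "nat \<Rightarrow> real"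
  assumes E: "digraph E"
    and p: "\<forall>\<^sub>F n in sequentially. 0 < p n" "p \<longlonglongrightarrow> 0"
    and sparse: "(\<lambda>n. real n powr (- 1 / real (maxdeg E))) \<in> o(p)"
    and xy: "0 \<le> x1" "0 \<le> x2" "0 \<le> y1" "y1 \<le> 1" "0 \<le> y2" "y2 \<le> 1"
    and level: "1 + \<delta> < fbar E x1 x2 y1 y2" and cost: "x1 * y1 + x2 * y2 < C"
  shows "\<forall>\<^sub>F n in sequentially.
           Phi E n (p n) \<delta> / (real n ^ 2 * p n ^ maxdeg E * ln (1 / p n)) \<le> C"
proof -
  define r where "r n = real n * p n ^ maxdeg E" for n
  define a1 where "a1 n = nat \<lceil>x1 * r n\<rceil>" for n
  define a2 where "a2 n = nat \<lceil>x2 * r n\<rceil>" for n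
  define b1 where "b1 n = nat \<lfloor>y1 * real (n - max (a1 n) (a2 n))\<rfloor>" for n
  define b2 where "b2 n = nat \<lfloor>y2 * real (n - max (a1 n) (a2 n))\<rfloor>" for n
  let ?profile = "\<lambda>n S. \<Prod>v\<in>UNIV. real (card (hub_range E S n (a1 n) (a2 n) (b1 n) (b2 n) v)
                                     - card (UNIV::'v set)) / (if v \<in> S then r n else real n)"
  have "0 < maxdeg E" by (rule smallo_powr_imp_exponent_pos[OF p sparse])
  note scale = tendsto_scale_n_power[OF p sparse, folded r_def]
  have r_pos: "\<forall>\<^sub>F n in sequentially. 0 < r n" and r_inv: "(\<lambda>n. 1 / r n) \<longlonglongrightarrow> 0"
    by (fact scale(1), fact scale(2))
  have hubs_small: "(\<lambda>n. real (max (a1 n) (a2 n)) / real n) \<longlonglongrightarrow> 0"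
    unfolding a1_def a2_def using scale xy(1,2) by (intro tendsto_max_nat_ceiling_div)
  have hubs_le: "\<forall>\<^sub>F n in sequentially. max (a1 n) (a2 n) \<le> n"
    by (rule eventually_le_of_tendsto_div_zero[OF hubs_small])
  have "(\<lambda>n. \<Sum>S\<in>indep_sets E. ?profile n S) \<longlonglongrightarrow> fbar E x1 x2 y1 y2"
    unfolding fbar_eq_sum_term using \<open>0 < maxdeg E\<close> xy
    by (intro tendsto_sum hub_profile_tendsto[OF _ _ _ _ _ _ r_pos r_inv a1_def a2_def hubs_small hubs_le
          b1_def b2_def]) simp_all
  then have ev_density: "\<forall>\<^sub>F n in sequentially. 1 + \<delta> < (\<Sum>S\<in>indep_sets E. ?profile n S)"
    using level by (rule order_tendstoD(1))
  have a_lim: "(\<lambda>n. real (a1 n) / r n) \<longlonglongrightarrow> x1" "(\<lambda>n. real (a2 n) / r n) \<longlonglongrightarrow> x2"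
    using tendsto_nat_ceiling_minus_div[OF r_pos r_inv, of _ 0] xy unfolding a1_def a2_def by simp_all
  have b_lim: "(\<lambda>n. real (b1 n) / real n) \<longlonglongrightarrow> y1" "(\<lambda>n. real (b2 n) / real n) \<longlonglongrightarrow> y2"
    using tendsto_nat_floor_minus_div[OF hubs_small hubs_le, of _ 0] xy unfolding b1_def b2_def
    by simp_all
  have "(\<lambda>n. real (a1 n) / r n * (real (b1 n) / real n)
            + real (b2 n) / real n * (real (a2 n) / r n)) \<longlonglongrightarrow> x1 * y1 + y2 * x2"
    by (intro tendsto_intros a_lim b_lim)
  then have ev_cost: "\<forall>\<^sub>F n in sequentially. real (a1 n) / r n * (real (b1 n) / real n)
            + real (b2 n) / real n * (real (a2 n) / r n) < C"
    using order_tendstoD(2)[of _ "x1 * y1 + y2 * x2" _ C] cost by (simp add: mult.commute)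
  show ?thesis using eventually_prob_range[OF p] hubs_le ev_density ev_cost
  proof eventually_elim
    case (elim n)
    have "b1 n \<le> n - max (a1 n) (a2 n)" "b2 n \<le> n - max (a1 n) (a2 n)"
      unfolding b1_def b2_def using xy(4,6) by (simp_all add: nat_floor_mult_le)
    then have budget: "max (a1 n) (a2 n) + max (b1 n) (b2 n) \<le> n" using elim(2) by linarith
    show ?case
      using Phi_ratio_hub_le[OF E _ _ _ budget, of "p n" \<delta>] elim(1,3,4) unfolding r_def by fastforce
  qed
qed

lemma Phi_ratio_le_Inf_fbar_costs:
  fixes E :: "('v::finite \<times> 'v) set" and p :: "nat \<Rightarrow> real"
  assumes E: "digraph E" and \<delta>: "0 < \<delta>"
    and p: "\<forall>\<^sub>F n in sequentially. 0 < p n" "p \<longlonglongrightarrow> 0"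
    and sparse: "(\<lambda>n. real n powr (- 1 / real (maxdeg E))) \<in> o(p)" and \<epsilon>: "0 < \<epsilon>"
  shows "\<forall>\<^sub>F n in sequentially. Phi E n (p n) \<delta> / (real n ^ 2 * p n ^ maxdeg E * ln (1 / p n))
           \<le> Inf (fbar_costs E (1 + \<delta>)) + \<epsilon>"
proof -
  let ?I = "Inf (fbar_costs E (1 + \<delta>))"
  obtain x0 where "0 \<le> x0" "fbar E x0 x0 1 1 = 1 + \<delta>"
    using exists_fbar_diagonal_level[OF E smallo_powr_imp_exponent_pos[OF p sparse], of "1 + \<delta>"] \<delta>
    by auto
  then have "fbar_costs E (1 + \<delta>) \<noteq> {}" using fbar_costsI[of x0 x0 1 1] by fastforce
  then obtain l where l: "l \<in> fbar_costs E (1 + \<delta>)" "l < ?I + \<epsilon>"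
    using cInf_lessD[of "fbar_costs E (1 + \<delta>)" "?I + \<epsilon>"] \<epsilon> by auto
  then obtain x1 x2 y1 y2 where l_eq: "l = x1 * y1 + x2 * y2"
    and xy: "0 \<le> x1" "0 \<le> x2" "0 \<le> y1" "y1 \<le> 1" "0 \<le> y2" "y2 \<le> 1"
    and level: "fbar E x1 x2 y1 y2 = 1 + \<delta>"
    by (auto elim: fbar_costsE)
  have "((\<lambda>t. t * l) \<longlongrightarrow> 1 * l) (at_right 1)" by (intro tendsto_intros)
  then have "\<forall>\<^sub>F t in at_right 1. t * l < ?I + \<epsilon>"
    using l(2) by (auto dest: order_tendstoD(2))
  moreover have "\<forall>\<^sub>F t in at_right (1::real). 1 < t" by (rule eventually_at_right_less)
  ultimately have "\<forall>\<^sub>F t in at_right (1::real). 1 < t \<and> t * l < ?I + \<epsilon>" by eventually_elim simp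
  then obtain t where t: "1 < t" "t * l < ?I + \<epsilon>"
    using eventually_happens'[of "at_right (1::real)"] by auto
  have "1 + t * \<delta> \<le> fbar E (t * x1) (t * x2) y1 y2"
    using fbar_scale_x_ge[of t x1 x2 y1 y2 E] t(1) xy level by simp
  moreover have "\<delta> < t * \<delta>" using t(1) \<delta> by simp
  ultimately have "1 + \<delta> < fbar E (t * x1) (t * x2) y1 y2" by linarith
  moreover have "(t * x1) * y1 + (t * x2) * y2 < ?I + \<epsilon>"
    using t(2) unfolding l_eq by (simp add: algebra_simps)
  ultimately show ?thesis
    using t(1) xy by (intro Phi_ratio_hub_eventually_le[OF E p sparse]) simp_all
qed

theorem proposition3p1:
  fixes E :: "('v::finite \<times> 'v) set" and p :: "nat \<Rightarrow> real" and \<delta> :: real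
  assumes "digraph E"
    and "\<delta> > 0"
    and "\<forall>\<^sub>F n in sequentially. 0 < p n"
    and "p \<longlonglongrightarrow> 0"
  shows
    "(weakly_connected E \<and> regular E (maxdeg E)
        \<and> (\<lambda>n. real n powr (- 2 / real (maxdeg E))) \<in> o(p)
      \<longrightarrow> (\<forall>\<epsilon>>0. \<forall>\<^sub>F n in sequentially.
            Phi E n (p n) \<delta> / (real n ^ 2 * p n ^ maxdeg E * ln (1 / p n))
              \<le> \<delta> powr (2 / real (card (UNIV::'v set))) + \<epsilon>))
     \<and>
     ((\<lambda>n. real n powr (- 1 / real (maxdeg E))) \<in> o(p)
      \<longrightarrow> (\<forall>\<epsilon>>0. \<forall>\<^sub>F n in sequentially.
            Phi E n (p n) \<delta> / (real n ^ 2 * p n ^ maxdeg E * ln (1 / p n))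
              \<le> Inf {x1 * y1 + x2 * y2 | x1 x2 y1 y2.
                       0 \<le> x1 \<and> 0 \<le> x2 \<and> 0 \<le> y1 \<and> y1 \<le> 1 \<and> 0 \<le> y2 \<and> y2 \<le> 1
                       \<and> fbar E x1 x2 y1 y2 = 1 + \<delta>} + \<epsilon>))
     \<and>
     Inf {x1 * y1 + x2 * y2 | x1 x2 y1 y2.
            0 \<le> x1 \<and> 0 \<le> x2 \<and> 0 \<le> y1 \<and> y1 \<le> 1 \<and> 0 \<le> y2 \<and> y2 \<le> 1
            \<and> fbar E x1 x2 y1 y2 = 1 + \<delta>}
     = Inf {x1 * y1 + x2 * y2 | x1 x2 y1 y2.
            0 \<le> x1 \<and> 0 \<le> x2 \<and> 0 \<le> y1 \<and> y1 \<le> 1 \<and> 0 \<le> y2 \<and> y2 \<le> 1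
            \<and> max y1 y2 = 1 \<and> fbar E x1 x2 y1 y2 = 1 + \<delta>}"
  apply (intro conjI impI allI)
  subgoal
    using Phi_ratio_regular_le[OF assms(1) _ assms(2-4)] by blast
  subgoal
    using Phi_ratio_le_Inf_fbar_costs[OF assms, unfolded fbar_costs_def] by blast
  subgoal
    using Inf_fbar_costs_normalized[of "1 + \<delta>" E] assms(2)
    unfolding fbar_costs_def fbar_costs_normalized_def by simp
  done

end
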